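(* Let $G=\mathbb{Z}/p^r\mathbb{Z}$. The maximal length $n$ of a chain $P_0\subsetneq P_1\subsetneq\cdots\subsetneq P_n$ of prime ideals of $\Omega_G$ equals $r+1$; such a maximal chain is, for any prime $q\ne p$, $$0\subsetneq\mathcal{S}^r(q)\subsetneq\mathcal{L}\mathcal{S}^{r-1}(q)\subsetneq\cdots\subsetneq\mathcal{L}^r(q).$$ That is, $\dim\Omega_G=r+1$.
   Context: Fix a prime $p$ and an integer $r\ge0$. For $0\le k\le r$ let $R_k$ be the commutative ring which is free as a $\mathbb{Z}$-module with basis $X_{k,0},\dots,X_{k,k}$ and multiplication $X_{k,i}X_{k,j}=p^{k-\max(i,j)}X_{k,\min(i,j)}$; thus $X_{k,k}=1$, and an integer $n$ is identified with $nX_{k,k}$. For $0\le k\le\ell\le r$ define: the additive map $\mathrm{ind}^\ell_k:R_k\to R_\ell$, $X_{k,i}\mapsto X_{\ell,i}$; the ring homomorphism $\mathrm{res}^\ell_k:R_\ell\to R_k$, $\mathrm{res}^\ell_k(X_{\ell,i})=p^{\ell-k}X_{k,i}$ if $i\le k$ and $=p^{\ell-i}$ if $i\ge k$; and the multiplicative map $\mathrm{jnd}^\ell_k:R_k\to R_\ell$, $$\mathrm{jnd}^\ell_k\Big(\sum_{i=0}^k m_iX_{k,i}\Big)=m_kX_{\ell,\ell}+\sum_{k\le i<\ell}\frac{m_k^{p^{\ell-i}}-m_k^{p^{\ell-i-1}}}{p^{\ell-i}}X_{\ell,i}+\sum_{0\le i<k}\frac{(\sum_{s=i}^k m_sp^{k-s})^{p^{\ell-k}}-(\sum_{s=i+1}^k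 m_sp^{k-s})^{p^{\ell-k}}}{p^{\ell-i}}X_{\ell,i}$$ ($m_i\in\mathbb{Z}$). For $k=\ell$ these maps are the identity. These data are the Burnside Tambara functor $\Omega_G$ on $G=\mathbb{Z}/p^r\mathbb{Z}$; keeping only indices $\le n$ gives $\Omega_{H_n}$. An ideal of $\Omega_{H_n}$ is a sequence $[I_0,\dots,I_n]$ of ideals $I_k\subseteq R_k$ such that for every $1\le k\le n$: $\mathrm{ind}^k_{k-1}(I_{k-1})\subseteq I_k$, $\mathrm{res}^k_{k-1}(I_k)\subseteq I_{k-1}$, $\mathrm{jnd}^k_{k-1}(I_{k-1})\subseteq I_k$; inclusion is componentwise. It is proper if $I_0\ne R_0$. A proper ideal is prime if for all $0\le\ell\le k\le n$, $a\in R_k$, $b\in R_\ell$: whenever $(\mathrm{jnd}^m_i\mathrm{res}^k_i(a))\cdot(\mathrm{jnd}^m_j\mathrm{res}^\ell_j(b))\in I_m$ for all $0\le i\le k$, $0\le j\le\ell$, $m=\max(i,j)$, then $a\in I_k$ or $b\in I_\ell$. Operators: for an ideal $I\subseteq R_{k-1}$, $L(I)=(\mathrm{res}^k_{k-1})^{-1}(I)\subseteq R_k$ and $S(I)$ is the ideal of $R_k$ generated by $\mathrm{ind}^k_{k-1}(I)\cup\mathrm{jnd}^k_{k-1}(I)$; for an ideal $\mathscr I=[I_0,\dots,I_{k-1}]$ of $\Omega_{H_{k-1}}$, $\mathcal{L}\mathscr I=[I_0,\dots,I_{k-1},L(I_{k-1})]$, $\mathcal{S}\mathscr I=[I_0,\dots,I_{k-1},S(I_{k-1})]$;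 iterates are $\mathcal L^n,\mathcal S^n$; $(q)$ denotes the ideal $[q\mathbb{Z}]$ of $\Omega_{H_0}$. *)

theory Defs
  imports Main "HOL-Computational_Algebra.Primes" "HOL-Library.Extended_Nat"
begin

text \<open>Elements of R_k are coefficient functions m (coefficient of X_{k,i} is m i),
  zero outside 0..k.\<close>

definition elt :: "nat \<Rightarrow> (nat \<Rightarrow> int) set" where
  "elt k = {a. \<forall>i>k. a i = 0}"

definition zero_elt :: "nat \<Rightarrow> int" where
  "zero_elt = (\<lambda>_. 0)"

text \<open>Multiplication in R_k: X_{k,i} X_{k,j} = p^(k - max i j) X_{k, min i j}.\<close>
definition rmult :: "nat \<Rightarrow> nat \<Rightarrow> (nat \<Rightarrow> int) \<Rightarrow> (nat \<Rightarrow> int) \<Rightarrow> (nat \<Rightarrow> int)" where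
  "rmult p k a b = (\<lambda>i. if i \<le> k then
      (\<Sum>j\<le>k. \<Sum>l\<le>k. if min j l = i then a j * b l * int p ^ (k - max j l) else 0)
    else 0)"

definition rideal :: "nat \<Rightarrow> nat \<Rightarrow> (nat \<Rightarrow> int) set \<Rightarrow> bool" where
  "rideal p k I \<longleftrightarrow> I \<subseteq> elt k \<and> zero_elt \<in> I
     \<and> (\<forall>a\<in>I. \<forall>b\<in>I. (\<lambda>i. a i + b i) \<in> I)
     \<and> (\<forall>a\<in>I. (\<lambda>i. - a i) \<in> I)
     \<and> (\<forall>a\<in>I. \<forall>b\<in>elt k. rmult p k b a \<in> I)"

text \<open>ind^l_k : R_k \<rightarrow> R_l, X_{k,i} \<mapsto> X_{l,i} (coefficients unchanged).\<close>
definition tind :: "nat \<Rightarrow> nat \<Rightarrow> (nat \<Rightarrow> int) \<Rightarrow> (nat \<Rightarrow> int)" where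
  "tind l k a = a"

definition tres :: "nat \<Rightarrow> nat \<Rightarrow> nat \<Rightarrow> (nat \<Rightarrow> int) \<Rightarrow> (nat \<Rightarrow> int)" where
  "tres p l k a = (\<lambda>j. if j < k then int p ^ (l - k) * a j
      else if j = k then (\<Sum>i\<in>{k..l}. int p ^ (l - i) * a i) else 0)"

text \<open>jnd^l_k : R_k \<rightarrow> R_l (the divisions are exact).\<close>
definition tjnd :: "nat \<Rightarrow> nat \<Rightarrow> nat \<Rightarrow> (nat \<Rightarrow> int) \<Rightarrow> (nat \<Rightarrow> int)" where
  "tjnd p l k m = (\<lambda>i.
     if i = l then m k
     else if k \<le> i \<and> i < l then
       (m k ^ (p ^ (l - i)) - m k ^ (p ^ (l - i - 1))) div (int p ^ (l - i))
     else if i < k then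
       ((\<Sum>s\<in>{i..k}. m s * int p ^ (k - s)) ^ (p ^ (l - k))
        - (\<Sum>s\<in>{i+1..k}. m s * int p ^ (k - s)) ^ (p ^ (l - k))) div (int p ^ (l - i))
     else 0)"

text \<open>Ideal of the Tambara functor Omega_{H_n}: list [I_0, ..., I_n].\<close>
definition tideal :: "nat \<Rightarrow> nat \<Rightarrow> (nat \<Rightarrow> int) set list \<Rightarrow> bool" where
  "tideal p n I \<longleftrightarrow> length I = Suc n \<and> (\<forall>k\<le>n. rideal p k (I ! k))
     \<and> (\<forall>k\<in>{1..n}. tind k (k - 1) ` (I ! (k - 1)) \<subseteq> I ! k
                   \<and> tres p k (k - 1) ` (I ! k) \<subseteq> I ! (k - 1)
                   \<and> tjnd p k (k - 1) ` (I ! (k - 1)) \<subseteq> I ! k)"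

definition tprime :: "nat \<Rightarrow> nat \<Rightarrow> (nat \<Rightarrow> int) set list \<Rightarrow> bool" where
  "tprime p n I \<longleftrightarrow> tideal p n I \<and> I ! 0 \<noteq> elt 0 \<and>
     (\<forall>k\<le>n. \<forall>l\<le>k. \<forall>a\<in>elt k. \<forall>b\<in>elt l.
        (\<forall>i\<le>k. \<forall>j\<le>l. rmult p (max i j) (tjnd p (max i j) i (tres p k i a))
                                         (tjnd p (max i j) j (tres p l j b)) \<in> I ! (max i j))
        \<longrightarrow> a \<in> I ! k \<or> b \<in> I ! l)"

definition tsubset :: "(nat \<Rightarrow> int) set list \<Rightarrow> (nat \<Rightarrow> int) set list \<Rightarrow> bool" where
  "tsubset I J \<longleftrightarrow> length I = length J \<and> (\<forall>k<length I. I ! k \<subseteq> J ! k)"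

definition tpsubset :: "(nat \<Rightarrow> int) set list \<Rightarrow> (nat \<Rightarrow> int) set list \<Rightarrow> bool" where
  "tpsubset I J \<longleftrightarrow> tsubset I J \<and> I \<noteq> J"

definition prime_chain :: "nat \<Rightarrow> nat \<Rightarrow> (nat \<Rightarrow> (nat \<Rightarrow> int) set list) \<Rightarrow> nat \<Rightarrow> bool" where
  "prime_chain p n C len \<longleftrightarrow> (\<forall>i\<le>len. tprime p n (C i)) \<and> (\<forall>i<len. tpsubset (C i) (C (Suc i)))"

definition tdim :: "nat \<Rightarrow> nat \<Rightarrow> enat" where
  "tdim p n = Sup {enat len | len. \<exists>C. prime_chain p n C len}"

definition Lset :: "nat \<Rightarrow> nat \<Rightarrow> (nat \<Rightarrow> int) set \<Rightarrow> (nat \<Rightarrow> int) set" where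
  "Lset p k I = {a \<in> elt k. tres p k (k - 1) a \<in> I}"

definition Sset :: "nat \<Rightarrow> nat \<Rightarrow> (nat \<Rightarrow> int) set \<Rightarrow> (nat \<Rightarrow> int) set" where
  "Sset p k I = \<Inter>{J. rideal p k J \<and> tind k (k - 1) ` I \<union> tjnd p k (k - 1) ` I \<subseteq> J}"

definition Lop :: "nat \<Rightarrow> (nat \<Rightarrow> int) set list \<Rightarrow> (nat \<Rightarrow> int) set list" where
  "Lop p I = I @ [Lset p (length I) (last I)]"

definition Sop :: "nat \<Rightarrow> (nat \<Rightarrow> int) set list \<Rightarrow> (nat \<Rightarrow> int) set list" where
  "Sop p I = I @ [Sset p (length I) (last I)]"

definition qid :: "nat \<Rightarrow> (nat \<Rightarrow> int) set list" where
  "qid q = [{a \<in> elt 0. int q dvd a 0}]"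

definition zero_tideal :: "nat \<Rightarrow> (nat \<Rightarrow> int) set list" where
  "zero_tideal n = replicate (Suc n) {zero_elt}"

definition std_chain :: "nat \<Rightarrow> nat \<Rightarrow> nat \<Rightarrow> nat \<Rightarrow> (nat \<Rightarrow> int) set list" where
  "std_chain p r q j = (if j = 0 then zero_tideal r
     else (Lop p ^^ (j - 1)) ((Sop p ^^ (r + 1 - j)) (qid q)))"

end

theory Submission
  imports Defs "HOL-Number_Theory.Number_Theory"
begin

text \<open>
  The ghost coordinates \<open>ghost p k t\<close>, \<open>t \<le> k\<close>, embed \<open>R\<^sub>k\<close> into \<open>\<int>\<^sup>k\<^sup>+\<^sup>1\<close> as a ring; \<open>res\<close> only forgets
  coordinates and \<open>jnd\<close> raises them to \<open>p\<close>-powers. So for a prime \<open>Q\<close> of \<open>\<int>\<close> and \<open>i \<le> n\<close> the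
  levels \<open>P(Q,i)\<^sub>k = {a. ghost p k t a \<in> Q for t \<le> min k i}\<close> form a prime ideal \<open>P(Q,i)\<close> of \<open>\<Omega>\<^bsub>H\<^sub>n\<^esub>\<close>.
  Conversely, by induction on \<open>n\<close>, every prime is some \<open>P(Q,i)\<close>: once the lower levels of a prime of
  \<open>\<Omega>\<^bsub>H\<^sub>n\<^sub>+\<^sub>1\<^esub>\<close> are those of \<open>P(Q,i)\<close>, its top level can only be \<open>P(Q,i)\<^sub>n\<^sub>+\<^sub>1\<close>, or \<open>P(Q,n+1)\<^sub>n\<^sub>+\<^sub>1\<close> when
  \<open>i = n\<close> and \<open>p \<notin> Q\<close>. Along a strict inclusion \<open>P(Q,i) \<subset> P(Q',i')\<close> either \<open>Q = 0 \<noteq> Q'\<close>, or \<open>Q = Q'\<close>,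
  \<open>p \<notin> Q\<close> and \<open>i' < i\<close> (when \<open>p \<in> Q\<close> the ideal does not depend on \<open>i\<close>); hence the height
  \<open>[Q \<noteq> 0] + (if p \<in> Q then n else n - i) \<le> n + 1\<close> strictly increases along chains. The chain
  \<open>0 \<subset> S\<^sup>r(q) \<subset> L S\<^sup>r\<^sup>-\<^sup>1(q) \<subset> \<dots> \<subset> L\<^sup>r(q)\<close> is \<open>P(0,r) \<subset> P(q,r) \<subset> P(q,r-1) \<subset> \<dots> \<subset> P(q,0)\<close>.
\<close>

section \<open>Ghost coordinates\<close>

text \<open>The ghost coordinates \<open>ghost p k t a\<close>, \<open>t \<le> k\<close>, of \<open>a \<in> R\<^sub>k\<close> are the marks of \<open>a\<close>:
  \<open>X\<^sub>k\<^sub>,\<^sub>s\<close> has \<open>p\<^sup>k\<^sup>-\<^sup>s\<close> points fixed by \<open>H\<^sub>t\<close> if \<open>t \<le> s\<close> and none otherwise.\<close>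

definition ghost :: "nat \<Rightarrow> nat \<Rightarrow> nat \<Rightarrow> (nat \<Rightarrow> int) \<Rightarrow> int" where
  "ghost p k t a = (\<Sum>s\<in>{t..k}. int p ^ (k - s) * a s)"

lemma ghost_top: "ghost p k k a = a k"
  by (simp add: ghost_def)

lemma ghost_above: "k < t \<Longrightarrow> ghost p k t a = 0"
  by (simp add: ghost_def)

lemma ghost_split_first: "t \<le> k \<Longrightarrow> ghost p k t a = int p ^ (k - t) * a t + ghost p k (Suc t) a"
  unfolding ghost_def by (simp add: sum.atLeast_Suc_atMost)

lemma ghost_Suc_level: "t \<le> m \<Longrightarrow> ghost p (Suc m) t a = a (Suc m) + int p * ghost p m t a"
proof -
  assume t: "t \<le> m"
  have "ghost p (Suc m) t a = (\<Sum>s\<in>{t..m}. int p ^ (Suc m - s) * a s) + a (Suc m)"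
    using t by (simp add: ghost_def)
  also have "(\<Sum>s\<in>{t..m}. int p ^ (Suc m - s) * a s) = (\<Sum>s\<in>{t..m}. int p * (int p ^ (m - s) * a s))"
    by (intro sum.cong refl) (simp add: Suc_diff_le)
  finally show ?thesis by (simp add: ghost_def sum_distrib_left)
qed

lemma ghost_Suc_level_elt: "a \<in> elt m \<Longrightarrow> t \<le> m \<Longrightarrow> ghost p (Suc m) t a = int p * ghost p m t a"
  by (simp add: ghost_Suc_level elt_def)

lemma ghost_eqI:
  assumes p: "p > 0" and a: "a \<in> elt k" and b: "b \<in> elt k"
    and h: "\<And>t. t \<le> k \<Longrightarrow> ghost p k t a = ghost p k t b"
  shows "a = b"
proof
  fix s show "a s = b s"
  proof (cases "s \<le> k")
    case True
    have "ghost p k (Suc s) a = ghost p k (Suc s) b"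
      using h ghost_above[of k "Suc s"] by (cases "Suc s \<le> k") auto
    then have "int p ^ (k - s) * a s = int p ^ (k - s) * b s"
      using ghost_split_first[OF True, of p a] ghost_split_first[OF True, of p b] h[OF True] by linarith
    then show ?thesis using p by simp
  next
    case False then show ?thesis using a b by (simp add: elt_def)
  qed
qed

lemma ghost_add: "ghost p k t (\<lambda>j. a j + b j) = ghost p k t a + ghost p k t b"
  by (simp add: ghost_def sum.distrib algebra_simps)

lemma ghost_minus: "ghost p k t (\<lambda>j. - a j) = - ghost p k t a"
  by (simp add: ghost_def sum_negf)

lemma ghost_diff: "ghost p k t (\<lambda>j. a j - b j) = ghost p k t a - ghost p k t b"
  by (simp add: ghost_def sum_subtractf algebra_simps)

lemma ghost_cmult: "ghost p k t (\<lambda>j. c * a j) = c * ghost p k t a"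
  by (simp add: ghost_def sum_distrib_left algebra_simps)

lemma ghost_dvd_if_top_zero: "a k = 0 \<Longrightarrow> int p dvd ghost p k t a"
  unfolding ghost_def
proof (rule dvd_sum)
  fix s assume "a k = 0" "s \<in> {t..k}"
  then show "int p dvd int p ^ (k - s) * a s"
    by (cases "s = k") (auto intro: dvd_mult2 simp: dvd_power)
qed

lemma ghost_cong_start: "t \<le> k \<Longrightarrow> int p dvd ghost p k 0 a - ghost p k t a"
proof (induction t)
  case (Suc t)
  have split: "ghost p k 0 a - ghost p k (Suc t) a = (ghost p k 0 a - ghost p k t a) + int p ^ (k - t) * a t"
    using ghost_split_first[of t k p a] Suc.prems by simp
  have "int p dvd int p ^ (k - t) * a t"
    using Suc.prems by (intro dvd_mult2 dvd_power) auto
  with Suc show ?case unfolding split by (simp add: dvd_add)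
qed simp

lemma ghost_rmult: "ghost p k t (rmult p k x y) = ghost p k t x * ghost p k t y"
proof -
  let ?P = "int p"
  have restrict: "\<And>f. (\<Sum>j\<le>k. if t \<le> j then f j else 0) = (\<Sum>j\<in>{t..k}. f j :: int)"
    by (subst sum.inter_filter[symmetric]) (auto intro!: sum.cong)
  have "ghost p k t (rmult p k x y) =
     (\<Sum>s\<in>{t..k}. \<Sum>j\<le>k. \<Sum>l\<le>k. if min j l = s then ?P ^ (k - s) * (x j * y l * ?P ^ (k - max j l)) else 0)"
    unfolding ghost_def rmult_def
    by (rule sum.cong) (auto simp: sum_distrib_left intro!: sum.cong)
  also have "\<dots> = (\<Sum>j\<le>k. \<Sum>l\<le>k. \<Sum>s\<in>{t..k}. if min j l = s then ?P ^ (k - s) * (x j * y l * ?P ^ (k - max j l)) else 0)"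
    by (subst sum.swap) (simp add: sum.swap[of _ "{t..k}"])
  also have "\<dots> = (\<Sum>j\<le>k. \<Sum>l\<le>k. if t \<le> min j l then ?P ^ (k - min j l) * (x j * y l * ?P ^ (k - max j l)) else 0)"
    by (intro sum.cong refl) (auto simp: sum.delta')
  also have "\<dots> = (\<Sum>j\<le>k. \<Sum>l\<le>k. (if t \<le> j then ?P ^ (k - j) * x j else 0) * (if t \<le> l then ?P ^ (k - l) * y l else 0))"
    by (intro sum.cong refl) (auto simp: min_def max_def)
  also have "\<dots> = (\<Sum>j\<le>k. if t \<le> j then ?P ^ (k - j) * x j else 0) * (\<Sum>l\<le>k. if t \<le> l then ?P ^ (k - l) * y l else 0)"
    by (simp add: sum_product)
  also have "\<dots> = ghost p k t x * ghost p k t y"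
    by (simp add: restrict ghost_def)
  finally show ?thesis .
qed

lemma ghost_tres:
  assumes "u \<le> k" "k \<le> l"
  shows "ghost p k u (tres p l k a) = ghost p l u a"
proof -
  have low: "{u..k} = {u..<k} \<union> {k}" and high: "{u..l} = {u..<k} \<union> {k..l}"
    using assms by auto
  have "ghost p k u (tres p l k a) = (\<Sum>s\<in>{u..<k}. int p ^ (k - s) * (int p ^ (l - k) * a s))
        + (\<Sum>i\<in>{k..l}. int p ^ (l - i) * a i)"
    unfolding ghost_def tres_def low by (subst sum.union_disjoint) auto
  also have "(\<Sum>s\<in>{u..<k}. int p ^ (k - s) * (int p ^ (l - k) * a s)) = (\<Sum>s\<in>{u..<k}. int p ^ (l - s) * a s)"
  proof (rule sum.cong)
    fix s assume "s \<in> {u..<k}"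
    then have "l - s = (k - s) + (l - k)" using assms by auto
    then show "int p ^ (k - s) * (int p ^ (l - k) * a s) = int p ^ (l - s) * a s"
      by (simp add: power_add)
  qed simp
  also have "\<dots> + (\<Sum>i\<in>{k..l}. int p ^ (l - i) * a i) = ghost p l u a"
    unfolding ghost_def high by (subst sum.union_disjoint) auto
  finally show ?thesis .
qed

lemma tres_elt: "tres p l k a \<in> elt k"
  by (simp add: elt_def tres_def)

lemma rmult_elt: "rmult p k a b \<in> elt k"
  by (simp add: elt_def rmult_def)

lemma tjnd_elt: "k \<le> l \<Longrightarrow> tjnd p l k a \<in> elt l"
  by (simp add: elt_def tjnd_def)

lemma elt_mono: "a \<in> elt m \<Longrightarrow> m \<le> k \<Longrightarrow> a \<in> elt k"
  by (simp add: elt_def)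

lemma elt_SucD:
  assumes "a \<in> elt (Suc m)" "a (Suc m) = 0"
  shows "a \<in> elt m"
  unfolding elt_def
proof (intro CollectI allI impI)
  fix j assume "m < j"
  then show "a j = 0" using assms by (cases "j = Suc m") (auto simp: elt_def)
qed

lemma rmult_commute: "p > 0 \<Longrightarrow> rmult p k a b = rmult p k b a"
  by (rule ghost_eqI[where k=k]) (auto simp: rmult_elt ghost_rmult)

lemma fermat_little_int:
  fixes x :: int
  assumes p: "prime p"
  shows "int p dvd x ^ p - x"
proof -
  define n where "n = nat (x mod int p)"
  have xn: "[x = int n] (mod int p)"
    using prime_gt_0_nat[OF p] by (simp add: n_def cong_def)
  have "[n ^ p = n] (mod p)"
  proof (cases "p dvd n")
    case True
    then show ?thesis
      using prime_gt_0_nat[OF p] by (simp add: cong_def dvd_imp_mod_0 dvd_power dvd_trans[of p n])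
  next
    case False
    have "[n ^ (p - 1) * n = 1 * n] (mod p)"
      by (rule cong_mult[OF fermat_theorem[OF p False] cong_refl])
    then show ?thesis
      using prime_gt_0_nat[OF p] by (simp add: power_Suc2[symmetric])
  qed
  then have "[int n ^ p = int n] (mod int p)"
    by (metis cong_int_iff of_nat_power)
  then have "[x ^ p = x] (mod int p)"
    using xn by (meson cong_pow cong_sym cong_trans)
  then show ?thesis by (simp add: cong_iff_dvd_diff)
qed

lemma prime_power_dvd_pow_prime_diff:
  fixes x y :: int
  assumes p: "prime p" and e: "e \<ge> 1" and d: "int p ^ e dvd x - y"
  shows "int p ^ (e + 1) dvd x ^ p - y ^ p"
proof -
  have "int p dvd int p ^ e" using e by (simp add: dvd_power)
  then have "int p dvd x - y" using d by (rule dvd_trans)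
  then have xy: "[x = y] (mod int p)" by (simp add: cong_iff_dvd_diff)
  have "[(\<Sum>i<p. y^(p - Suc i) * x^i) = (\<Sum>i<p. y^(p - Suc i) * y^i)] (mod int p)"
    by (intro cong_sum cong_mult cong_refl cong_pow xy)
  also have "(\<Sum>i<p. y^(p - Suc i) * y^i) = int p * y^(p-1)"
    by (simp add: power_add[symmetric])
  finally have "int p dvd (\<Sum>i<p. y^(p - Suc i) * x^i)"
    using cong_dvd_iff by (metis cong_sym dvd_triv_left)
  then have "int p ^ e * int p dvd (x - y) * (\<Sum>i<p. y^(p - Suc i) * x^i)"
    using d by (intro mult_dvd_mono) auto
  then show ?thesis by (simp add: power_diff_sumr2 power_add mult.commute)
qed

lemma prime_power_dvd_pow_prime_power_diff:
  fixes x y :: int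
  assumes p: "prime p" and e: "e \<ge> 1" and d: "int p ^ e dvd x - y"
  shows "int p ^ (e + f) dvd x ^ (p ^ f) - y ^ (p ^ f)"
proof (induction f)
  case (Suc f)
  have "int p ^ (e + f + 1) dvd (x ^ (p ^ f)) ^ p - (y ^ (p ^ f)) ^ p"
    using prime_power_dvd_pow_prime_diff[OF p _ Suc] e by simp
  then show ?case by (simp add: power_mult[symmetric] mult.commute)
qed (use d in simp)

text \<open>The two divisibilities below say that the divisions in the definition of \<open>tjnd\<close> are exact.\<close>

lemma prime_power_dvd_pow_iterate_diff:
  fixes x :: int
  assumes p: "prime p" and "i < l"
  shows "int p ^ (l - i) dvd x ^ (p ^ (l - i)) - x ^ (p ^ (l - Suc i))"
proof -
  obtain g where g: "l - i = Suc g" "l - Suc i = g" using assms by (metis Suc_diff_Suc diff_Suc_1)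
  have "int p ^ (1 + g) dvd (x ^ p) ^ (p ^ g) - x ^ (p ^ g)"
    by (rule prime_power_dvd_pow_prime_power_diff[OF p]) (use fermat_little_int[OF p] in auto)
  then show ?thesis using g by (simp add: power_mult[symmetric])
qed

lemma prime_power_dvd_ghost_pow_diff:
  assumes p: "prime p" and "i < k" "k \<le> l"
  shows "int p ^ (l - i) dvd ghost p k i a ^ (p ^ (l - k)) - ghost p k (Suc i) a ^ (p ^ (l - k))"
proof -
  have "int p ^ (k - i) dvd ghost p k i a - ghost p k (Suc i) a"
    using assms by (simp add: ghost_split_first)
  from prime_power_dvd_pow_prime_power_diff[OF p _ this, of "l - k"] assms
  show ?thesis by (simp add: add.commute)
qed

lemma ghost_tjnd:
  assumes p: "prime p" and kl: "k \<le> l" and ul: "u \<le> l"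
  shows "ghost p l u (tjnd p l k a) = ghost p k (min u k) a ^ (p ^ (l - max u k))"
  using ul
proof (induction u rule: inc_induct)
  case base
  then show ?case using kl by (simp add: ghost_top tjnd_def)
next
  case (step u)
  let ?y = "tjnd p l k a"
  have "ghost p l u ?y = int p ^ (l - u) * ?y u + ghost p l (Suc u) ?y"
    using step by (intro ghost_split_first) simp
  moreover have ghost_sum: "(\<Sum>s\<in>{v..k}. a s * int p ^ (k - s)) = ghost p k v a" for v
    by (simp add: ghost_def mult.commute)
  show ?case
  proof (cases "u < k")
    case True
    have "?y u = (ghost p k u a ^ (p ^ (l - k)) - ghost p k (Suc u) a ^ (p ^ (l - k))) div int p ^ (l - u)"
      using True kl by (simp add: tjnd_def ghost_sum)
    then have "int p ^ (l - u) * ?y u = ghost p k u a ^ (p ^ (l - k)) - ghost p k (Suc u) a ^ (p ^ (l - k))"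
      using prime_power_dvd_ghost_pow_diff[OF p True kl] by simp
    then show ?thesis
      using calculation step.IH True by (simp add: min_def max_def)
  next
    case False
    have "?y u = (a k ^ (p ^ (l - u)) - a k ^ (p ^ (l - Suc u))) div int p ^ (l - u)"
      using False step.hyps by (simp add: tjnd_def)
    then have "int p ^ (l - u) * ?y u = a k ^ (p ^ (l - u)) - a k ^ (p ^ (l - Suc u))"
      using prime_power_dvd_pow_iterate_diff[OF p, of u l "a k"] step.hyps by simp
    then show ?thesis
      using calculation step.IH False by (simp add: min_def max_def ghost_top)
  qed
qed

lemma ghost_tjnd_tres:
  assumes p: "prime p" and "i \<le> k" "i \<le> l" "u \<le> l"
  shows "ghost p l u (tjnd p l i (tres p k i a)) = ghost p k (min u i) a ^ (p ^ (l - max u i))"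
  using assms by (simp add: ghost_tjnd ghost_tres)

lemma tres_self: "a \<in> elt m \<Longrightarrow> tres p m m a = a"
  by (auto simp: tres_def elt_def)

lemma tjnd_self: "prime p \<Longrightarrow> a \<in> elt n \<Longrightarrow> tjnd p n n a = a"
  by (rule ghost_eqI[where p=p and k=n]) (auto simp: prime_gt_0_nat tjnd_elt ghost_tjnd)

lemma ghost_tprime_product:
  assumes p: "prime p" and "i \<le> k" "j \<le> l" "u \<le> max i j"
  shows "ghost p (max i j) u (rmult p (max i j) (tjnd p (max i j) i (tres p k i a)) (tjnd p (max i j) j (tres p l j b)))
    = ghost p k (min u i) a ^ (p ^ (max i j - max u i)) * ghost p l (min u j) b ^ (p ^ (max i j - max u j))"
  using assms by (simp add: ghost_rmult ghost_tjnd_tres)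

section \<open>Prime ideals of \<open>\<int>\<close>\<close>

definition int_ideal :: "int set \<Rightarrow> bool" where
  "int_ideal Q \<longleftrightarrow> 0 \<in> Q \<and> (\<forall>x\<in>Q. \<forall>y\<in>Q. x + y \<in> Q) \<and> (\<forall>x\<in>Q. \<forall>c. c * x \<in> Q)"

definition int_prime_ideal :: "int set \<Rightarrow> bool" where
  "int_prime_ideal Q \<longleftrightarrow> int_ideal Q \<and> 1 \<notin> Q \<and> (\<forall>x y. x * y \<in> Q \<longrightarrow> x \<in> Q \<or> y \<in> Q)"

lemma int_ideal_zero: "int_ideal Q \<Longrightarrow> 0 \<in> Q"
  by (simp add: int_ideal_def)

lemma int_ideal_add: "int_ideal Q \<Longrightarrow> x \<in> Q \<Longrightarrow> y \<in> Q \<Longrightarrow> x + y \<in> Q"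
  by (simp add: int_ideal_def)

lemma int_ideal_mult_left: "int_ideal Q \<Longrightarrow> x \<in> Q \<Longrightarrow> c * x \<in> Q"
  by (simp add: int_ideal_def)

lemma int_ideal_mult_right: "int_ideal Q \<Longrightarrow> x \<in> Q \<Longrightarrow> x * c \<in> Q"
  using int_ideal_mult_left[of Q x c] by (simp add: mult.commute)

lemma int_ideal_minus: "int_ideal Q \<Longrightarrow> x \<in> Q \<Longrightarrow> - x \<in> Q"
  using int_ideal_mult_left[of Q x "-1"] by simp

lemma int_ideal_diff: "int_ideal Q \<Longrightarrow> x \<in> Q \<Longrightarrow> y \<in> Q \<Longrightarrow> x - y \<in> Q"
  using int_ideal_add[of Q x "-y"] int_ideal_minus[of Q y] by simp

lemma int_ideal_power: "int_ideal Q \<Longrightarrow> x \<in> Q \<Longrightarrow> n > 0 \<Longrightarrow> x ^ n \<in> Q"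
  by (cases n) (auto intro: int_ideal_mult_right)

lemma int_prime_ideal_imp_ideal: "int_prime_ideal Q \<Longrightarrow> int_ideal Q"
  by (simp add: int_prime_ideal_def)

lemma int_prime_ideal_mult: "int_prime_ideal Q \<Longrightarrow> x * y \<in> Q \<Longrightarrow> x \<in> Q \<or> y \<in> Q"
  by (simp add: int_prime_ideal_def)

lemma int_prime_ideal_one: "int_prime_ideal Q \<Longrightarrow> 1 \<notin> Q"
  by (simp add: int_prime_ideal_def)

lemma int_prime_ideal_zero: "int_prime_ideal {0}"
  unfolding int_prime_ideal_def int_ideal_def by auto

lemma int_prime_ideal_multiples: "prime q \<Longrightarrow> int_prime_ideal {x. int q dvd x}"
  unfolding int_prime_ideal_def int_ideal_def
  using prime_dvd_mult_iff[of "int q"] prime_gt_1_nat[of q] by auto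

lemma int_ideal_eq_multiples:
  assumes Q: "int_ideal Q" and nonzero: "Q \<noteq> {0}"
  obtains g where "g > 0" "Q = {x. g dvd x}"
proof -
  obtain y where y: "y \<in> Q" "y \<noteq> 0" using nonzero int_ideal_zero[OF Q] by blast
  have "int (nat \<bar>y\<bar>) \<in> Q"
    using y int_ideal_minus[OF Q] by (cases "y > 0") auto
  then have ex: "\<exists>n. n > 0 \<and> int n \<in> Q" using y by (intro exI[of _ "nat \<bar>y\<bar>"]) simp
  define g where "g = (LEAST n. n > 0 \<and> int n \<in> Q)"
  have g: "g > 0" "int g \<in> Q"
    using LeastI_ex[OF ex] by (simp_all add: g_def)
  have least: "g \<le> n" if "n > 0" "int n \<in> Q" for n
    unfolding g_def using that by (simp add: Least_le)
  have "Q = {x. int g dvd x}"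
  proof safe
    fix x assume x: "x \<in> Q"
    have "x mod int g = x - int g * (x div int g)" by (simp add: minus_mult_div_eq_mod)
    also have "\<dots> \<in> Q" by (intro int_ideal_diff[OF Q x] int_ideal_mult_right[OF Q g(2)])
    finally have mod_in: "int (nat (x mod int g)) \<in> Q" using g(1) by simp
    have "x mod int g = 0"
    proof (rule ccontr)
      assume "x mod int g \<noteq> 0"
      then have "g \<le> nat (x mod int g)"
        using mod_in g(1) by (intro least) (simp_all add: order_le_neq_trans)
      moreover have "x mod int g < int g" using g(1) by simp
      ultimately show False using g(1) by (simp add: le_nat_iff)
    qed
    then show "int g dvd x" by (simp add: dvd_eq_mod_eq_0)
  next
    fix x assume "int g dvd x"
    then show "x \<in> Q" using g(2) int_ideal_mult_right[OF Q] by (auto elim: dvdE)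
  qed
  with g(1) show thesis by (intro that[of "int g"]) simp_all
qed

lemma int_prime_ideal_maximal:
  assumes Q: "int_prime_ideal Q" and nonzero: "Q \<noteq> {0}" and Q': "int_prime_ideal Q'" and sub: "Q \<subseteq> Q'"
  shows "Q' = Q"
proof -
  note ideal = int_prime_ideal_imp_ideal
  obtain g where g: "g > 0" "Q = {x. g dvd x}"
    using int_ideal_eq_multiples[OF ideal[OF Q] nonzero] by blast
  have "Q' \<noteq> {0}" using sub nonzero int_ideal_zero[OF ideal[OF Q]] by blast
  then obtain g' where g': "Q' = {x. g' dvd x}"
    using int_ideal_eq_multiples[OF ideal[OF Q']] by blast
  have "g' dvd g" using sub g g' by auto
  then obtain h where gh: "g = g' * h" by (rule dvdE)
  then have "g' * h \<in> Q" using g(2) by simp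
  then have "g' \<in> Q \<or> h \<in> Q" by (rule int_prime_ideal_mult[OF Q])
  then show ?thesis
  proof
    assume "g' \<in> Q"
    then have "Q' \<subseteq> Q" using g' int_ideal_mult_right[OF ideal[OF Q]] by (auto elim: dvdE)
    with sub show ?thesis by blast
  next
    assume "h \<in> Q"
    then obtain c where "h = g * c" using g by auto
    then have "g * (g' * c) = g * 1" using gh by (simp add: algebra_simps)
    then have "g' dvd 1" using g(1) by (metis dvd_triv_left mult_left_cancel less_irrefl)
    then have "1 \<in> Q'" using g' by simp
    then show ?thesis using int_prime_ideal_one[OF Q'] by simp
  qed
qed

section \<open>The prime ideals \<open>P(Q,i)\<close>\<close>

text \<open>\<open>ghost_ideal p Q i k\<close> is the level \<open>P(Q,i)\<^sub>k\<close>, and \<open>ghost_tideal p Q i n\<close> is \<open>P(Q,i)\<close> in \<open>\<Omega>\<^bsub>H\<^sub>n\<^esub>\<close>.\<close>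

definition ghost_ideal :: "nat \<Rightarrow> int set \<Rightarrow> nat \<Rightarrow> nat \<Rightarrow> (nat \<Rightarrow> int) set" where
  "ghost_ideal p Q i k = {a \<in> elt k. \<forall>t \<le> min k i. ghost p k t a \<in> Q}"

definition ghost_tideal :: "nat \<Rightarrow> int set \<Rightarrow> nat \<Rightarrow> nat \<Rightarrow> (nat \<Rightarrow> int) set list" where
  "ghost_tideal p Q i n = map (ghost_ideal p Q i) [0..<Suc n]"

text \<open>\<open>basis_elt c j\<close> is \<open>c X\<^sub>k\<^sub>,\<^sub>j\<close> in any \<open>R\<^sub>k\<close> with \<open>j \<le> k\<close>; in \<open>R\<^sub>j\<close> it is the constant \<open>c\<close>.\<close>

definition basis_elt :: "int \<Rightarrow> nat \<Rightarrow> nat \<Rightarrow> int" where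
  "basis_elt c j = (\<lambda>s. if s = j then c else 0)"

lemma mem_ghost_ideal: "a \<in> ghost_ideal p Q i k \<longleftrightarrow> a \<in> elt k \<and> (\<forall>t \<le> min k i. ghost p k t a \<in> Q)"
  by (simp add: ghost_ideal_def)

lemma length_ghost_tideal [simp]: "length (ghost_tideal p Q i n) = Suc n"
  by (simp add: ghost_tideal_def)

lemma nth_ghost_tideal: "k \<le> n \<Longrightarrow> ghost_tideal p Q i n ! k = ghost_ideal p Q i k"
  by (simp add: ghost_tideal_def del: upt_Suc)

lemma last_ghost_tideal: "last (ghost_tideal p Q i n) = ghost_ideal p Q i n"
  by (simp add: ghost_tideal_def)

lemma ghost_tideal_eqI:
  "(\<And>k. k \<le> n \<Longrightarrow> ghost_ideal p Q i k = ghost_ideal p Q' i' k) \<Longrightarrow> ghost_tideal p Q i n = ghost_tideal p Q' i' n"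
  unfolding ghost_tideal_def by (auto simp: less_Suc_eq_le)

lemma ghost_tideal_snoc:
  assumes "\<And>k. k \<le> n \<Longrightarrow> ghost_ideal p Q i k = ghost_ideal p Q i' k"
  shows "ghost_tideal p Q i n @ [ghost_ideal p Q i' (Suc n)] = ghost_tideal p Q i' (Suc n)"
  using assms by (auto simp: ghost_tideal_def)

lemma ghost_ideal_index_above: "k \<le> i \<Longrightarrow> k \<le> i' \<Longrightarrow> ghost_ideal p Q i k = ghost_ideal p Q i' k"
  by (simp add: ghost_ideal_def min_def)

lemma ghost_ideal_antimono: "i \<le> i' \<Longrightarrow> ghost_ideal p Q i' k \<subseteq> ghost_ideal p Q i k"
  by (auto simp: ghost_ideal_def)

lemma ghost_ideal_elt: "a \<in> ghost_ideal p Q i k \<Longrightarrow> a \<in> elt k"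
  by (simp add: ghost_ideal_def)

lemma basis_elt_elt: "basis_elt c k \<in> elt k"
  by (simp add: basis_elt_def elt_def)

lemma ghost_basis_elt: "t \<le> k \<Longrightarrow> ghost p k t (basis_elt c k) = c"
  by (simp add: ghost_def basis_elt_def if_distrib cong: if_cong)

lemma ghost_basis_elt_Suc: "t \<le> m \<Longrightarrow> ghost p (Suc m) t (basis_elt c m) = int p * c"
  by (simp add: ghost_Suc_level_elt basis_elt_elt ghost_basis_elt)

lemma basis_elt_mem_ghost_ideal: "c \<in> Q \<Longrightarrow> basis_elt c k \<in> ghost_ideal p Q i k"
  by (simp add: ghost_ideal_def basis_elt_elt ghost_basis_elt)

lemma rmult_basis_elt: "p > 0 \<Longrightarrow> y \<in> elt k \<Longrightarrow> rmult p k (basis_elt c k) y = (\<lambda>j. c * y j)"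
proof (rule ghost_eqI[where k=k])
  show "(\<lambda>j. c * y j) \<in> elt k" if "y \<in> elt k" using that by (simp add: elt_def)
  show "ghost p k t (rmult p k (basis_elt c k) y) = ghost p k t (\<lambda>j. c * y j)" if "t \<le> k" for t
    using that by (simp add: ghost_rmult ghost_basis_elt ghost_cmult)
qed (simp_all add: rmult_elt)

lemma rideal_elt: "rideal p k I \<Longrightarrow> a \<in> I \<Longrightarrow> a \<in> elt k"
  by (auto simp: rideal_def)

lemma rideal_add: "rideal p k I \<Longrightarrow> a \<in> I \<Longrightarrow> b \<in> I \<Longrightarrow> (\<lambda>j. a j + b j) \<in> I"
  by (simp add: rideal_def)

lemma rideal_diff: "rideal p k I \<Longrightarrow> a \<in> I \<Longrightarrow> b \<in> I \<Longrightarrow> (\<lambda>j. a j - b j) \<in> I"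
  using rideal_add[of p k I a "\<lambda>j. - b j"] by (simp add: rideal_def)

lemma rideal_mult: "rideal p k I \<Longrightarrow> a \<in> I \<Longrightarrow> b \<in> elt k \<Longrightarrow> rmult p k b a \<in> I"
  by (simp add: rideal_def)

lemma rideal_mult_right: "p > 0 \<Longrightarrow> rideal p k I \<Longrightarrow> a \<in> I \<Longrightarrow> b \<in> elt k \<Longrightarrow> rmult p k a b \<in> I"
  using rideal_mult rmult_commute by metis

lemma rideal_cmult: "p > 0 \<Longrightarrow> rideal p k I \<Longrightarrow> a \<in> I \<Longrightarrow> (\<lambda>j. c * a j) \<in> I"
  using rideal_mult[of p k I a "basis_elt c k"] rmult_basis_elt rideal_elt basis_elt_elt by metis

lemma ghost_ideal_rideal:
  assumes Q: "int_ideal Q"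
  shows "rideal p k (ghost_ideal p Q i k)"
  unfolding rideal_def
proof (intro conjI ballI)
  show "ghost_ideal p Q i k \<subseteq> elt k" by (auto simp: ghost_ideal_def)
  show "zero_elt \<in> ghost_ideal p Q i k"
    using Q by (simp add: ghost_ideal_def elt_def zero_elt_def ghost_def int_ideal_zero)
  fix a assume a: "a \<in> ghost_ideal p Q i k"
  show "(\<lambda>j. a j + b j) \<in> ghost_ideal p Q i k" if "b \<in> ghost_ideal p Q i k" for b
    using a that Q by (auto simp: ghost_ideal_def ghost_add elt_def intro: int_ideal_add)
  show "(\<lambda>i. - a i) \<in> ghost_ideal p Q i k"
    using a Q by (auto simp: ghost_ideal_def ghost_minus elt_def intro: int_ideal_minus)
  show "rmult p k b a \<in> ghost_ideal p Q i k" if "b \<in> elt k" for b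
    using a Q by (auto simp: ghost_ideal_def ghost_rmult rmult_elt intro: int_ideal_mult_left)
qed

lemma ghost_ideal_tind:
  assumes Q: "int_ideal Q" and a: "a \<in> ghost_ideal p Q i m"
  shows "a \<in> ghost_ideal p Q i (Suc m)"
  unfolding mem_ghost_ideal
proof (intro conjI allI impI)
  have a_elt: "a \<in> elt m" using a by (rule ghost_ideal_elt)
  then show "a \<in> elt (Suc m)" by (simp add: elt_def)
  fix t assume t: "t \<le> min (Suc m) i"
  show "ghost p (Suc m) t a \<in> Q"
  proof (cases "t \<le> m")
    case True
    then have "ghost p m t a \<in> Q" using a t by (simp add: ghost_ideal_def)
    then show ?thesis using True a_elt Q by (simp add: ghost_Suc_level_elt int_ideal_mult_left)
  next
    case False
    then have "t = Suc m" using t by simp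
    then show ?thesis using a_elt Q by (simp add: ghost_top elt_def int_ideal_zero)
  qed
qed

lemma ghost_ideal_tres:
  "a \<in> ghost_ideal p Q i (Suc m) \<Longrightarrow> tres p (Suc m) m a \<in> ghost_ideal p Q i m"
  by (auto simp: ghost_ideal_def tres_elt ghost_tres)

lemma ghost_ideal_tjnd_tres:
  assumes p: "prime p" and Q: "int_ideal Q" and a: "a \<in> ghost_ideal p Q i k" and "j \<le> k" "j \<le> l"
    and below: "\<And>u. u \<le> min l i \<Longrightarrow> min u j \<le> i"
  shows "tjnd p l j (tres p k j a) \<in> ghost_ideal p Q i l"
  unfolding mem_ghost_ideal
proof (intro conjI allI impI)
  show "tjnd p l j (tres p k j a) \<in> elt l" using \<open>j \<le> l\<close> by (rule tjnd_elt)
  fix u assume u: "u \<le> min l i"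
  have "min u j \<le> min k i" using below[OF u] \<open>j \<le> k\<close> by simp
  then have "ghost p k (min u j) a \<in> Q" using a by (simp add: ghost_ideal_def)
  then show "ghost p l u (tjnd p l j (tres p k j a)) \<in> Q"
    using u assms prime_gt_0_nat[OF p] by (simp add: ghost_tjnd_tres int_ideal_power)
qed

lemma ghost_ideal_tjnd:
  assumes p: "prime p" and Q: "int_ideal Q" and a: "a \<in> ghost_ideal p Q i m"
  shows "tjnd p (Suc m) m a \<in> ghost_ideal p Q i (Suc m)"
proof -
  have "tjnd p (Suc m) m (tres p m m a) \<in> ghost_ideal p Q i (Suc m)"
    by (rule ghost_ideal_tjnd_tres[OF p Q a]) auto
  then show ?thesis using tres_self[OF ghost_ideal_elt[OF a]] by simp
qed

lemma ghost_tideal_tideal: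
  assumes p: "prime p" and Q: "int_ideal Q"
  shows "tideal p n (ghost_tideal p Q i n)"
  unfolding tideal_def
proof (intro conjI allI impI ballI)
  show "length (ghost_tideal p Q i n) = Suc n" by simp
  show "rideal p k (ghost_tideal p Q i n ! k)" if "k \<le> n" for k
    using that Q by (simp add: nth_ghost_tideal ghost_ideal_rideal)
next
  fix k assume "k \<in> {1..n}"
  then obtain m where m: "k = Suc m" "m < n" by (cases k) auto
  then show "tind k (k - 1) ` (ghost_tideal p Q i n ! (k - 1)) \<subseteq> ghost_tideal p Q i n ! k"
    and "tres p k (k - 1) ` (ghost_tideal p Q i n ! k) \<subseteq> ghost_tideal p Q i n ! (k - 1)"
    and "tjnd p k (k - 1) ` (ghost_tideal p Q i n ! (k - 1)) \<subseteq> ghost_tideal p Q i n ! k"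
    using p Q by (auto simp: nth_ghost_tideal tind_def ghost_ideal_tind ghost_ideal_tres ghost_ideal_tjnd)
qed

lemma ghost_tideal_tprime:
  assumes p: "prime p" and Q: "int_prime_ideal Q"
  shows "tprime p n (ghost_tideal p Q i n)"
  unfolding tprime_def
proof (intro conjI allI impI ballI)
  show "tideal p n (ghost_tideal p Q i n)"
    using ghost_tideal_tideal[OF p int_prime_ideal_imp_ideal[OF Q]] .
  have "basis_elt 1 0 \<notin> ghost_ideal p Q i 0"
    using Q by (simp add: ghost_ideal_def ghost_basis_elt int_prime_ideal_one)
  then show "ghost_tideal p Q i n ! 0 \<noteq> elt 0"
    using basis_elt_elt by (auto simp: nth_ghost_tideal)
next
  fix k l a b
  assume k: "k \<le> n" and l: "l \<le> k" and a: "a \<in> elt k" and b: "b \<in> elt l"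
    and H: "\<forall>i'\<le>k. \<forall>j\<le>l. rmult p (max i' j) (tjnd p (max i' j) i' (tres p k i' a))
              (tjnd p (max i' j) j (tres p l j b)) \<in> ghost_tideal p Q i n ! max i' j"
  show "a \<in> ghost_tideal p Q i n ! k \<or> b \<in> ghost_tideal p Q i n ! l"
  proof (rule ccontr)
    assume "\<not> ?thesis"
    then obtain t s where t: "t \<le> min k i" "ghost p k t a \<notin> Q" and s: "s \<le> min l i" "ghost p l s b \<notin> Q"
      using k l a b by (auto simp: nth_ghost_tideal ghost_ideal_def)
    let ?M = "max t s"
    have "rmult p ?M (tjnd p ?M t (tres p k t a)) (tjnd p ?M s (tres p l s b)) \<in> ghost_ideal p Q i ?M"
      using H t s k l by (auto simp: nth_ghost_tideal)
    then have "ghost p ?M ?M (rmult p ?M (tjnd p ?M t (tres p k t a)) (tjnd p ?M s (tres p l s b))) \<in> Q"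
      using t s by (auto simp: ghost_ideal_def)
    moreover have "ghost p ?M ?M (rmult p ?M (tjnd p ?M t (tres p k t a)) (tjnd p ?M s (tres p l s b)))
       = ghost p k t a * ghost p l s b"
      using ghost_tprime_product[OF p _ _ order.refl, of t k s l a b] t s by (simp add: max_def)
    ultimately show False using t s int_prime_ideal_mult[OF Q] by auto
  qed
qed

section \<open>The standard chain\<close>

lemma Lset_ghost_ideal:
  "i \<le> n \<Longrightarrow> Lset p (Suc n) (ghost_ideal p Q i n) = ghost_ideal p Q i (Suc n)"
  unfolding Lset_def ghost_ideal_def by (auto simp: tres_elt ghost_tres min_def)

lemma Lop_ghost_tideal: "i \<le> n \<Longrightarrow> Lop p (ghost_tideal p Q i n) = ghost_tideal p Q i (Suc n)"
  unfolding Lop_def last_ghost_tideal length_ghost_tideal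
  by (simp add: Lset_ghost_ideal ghost_tideal_snoc)

lemma ghost_ideal_top_decomposition:
  assumes p: "prime p" and Q: "int_prime_ideal Q" and pQ: "int p \<notin> Q"
    and a: "a \<in> ghost_ideal p Q (Suc n) (Suc n)"
  shows "(\<lambda>j. a j - tjnd p (Suc n) n (basis_elt (a (Suc n)) n) j) \<in> ghost_ideal p Q n n"
    (is "?r \<in> _")
proof -
  note ideal = int_prime_ideal_imp_ideal[OF Q]
  let ?x = "basis_elt (a (Suc n)) n"
  have "ghost p (Suc n) (Suc n) a \<in> Q" using a by (simp add: ghost_ideal_def)
  then have "a (Suc n) \<in> Q" by (simp add: ghost_top)
  then have jx: "tjnd p (Suc n) n ?x \<in> ghost_ideal p Q n (Suc n)"
    by (intro ghost_ideal_tjnd[OF p ideal] basis_elt_mem_ghost_ideal)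
  have r_elt: "?r \<in> elt n"
    using ghost_ideal_elt[OF a] tjnd_elt[of n "Suc n" p ?x]
    by (auto simp: elt_def tjnd_def basis_elt_def Suc_lessI)
  show ?thesis unfolding mem_ghost_ideal
  proof (intro conjI allI impI r_elt)
    fix t assume t: "t \<le> min n n"
    have "ghost p (Suc n) t a \<in> Q" using a t by (simp add: ghost_ideal_def)
    moreover have "ghost p (Suc n) t (tjnd p (Suc n) n ?x) \<in> Q" using jx t by (simp add: ghost_ideal_def)
    ultimately have "ghost p (Suc n) t ?r \<in> Q" by (simp add: ghost_diff int_ideal_diff[OF ideal])
    then have "int p * ghost p n t ?r \<in> Q" using r_elt t by (simp add: ghost_Suc_level_elt)
    then show "ghost p n t ?r \<in> Q" using int_prime_ideal_mult[OF Q] pQ by blast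
  qed
qed

lemma Sset_ghost_ideal:
  assumes p: "prime p" and Q: "int_prime_ideal Q" and pQ: "int p \<notin> Q"
  shows "Sset p (Suc n) (ghost_ideal p Q n n) = ghost_ideal p Q (Suc n) (Suc n)"
proof
  note ideal = int_prime_ideal_imp_ideal[OF Q]
  have same_below: "ghost_ideal p Q n n = ghost_ideal p Q (Suc n) n"
    by (rule ghost_ideal_index_above) simp_all
  show "Sset p (Suc n) (ghost_ideal p Q n n) \<subseteq> ghost_ideal p Q (Suc n) (Suc n)"
    unfolding Sset_def
  proof (rule Inter_lower, safe)
    show "rideal p (Suc n) (ghost_ideal p Q (Suc n) (Suc n))" by (rule ghost_ideal_rideal[OF ideal])
    show "tind (Suc n) (Suc n - 1) x \<in> ghost_ideal p Q (Suc n) (Suc n)"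
      and "tjnd p (Suc n) (Suc n - 1) x \<in> ghost_ideal p Q (Suc n) (Suc n)"
      if "x \<in> ghost_ideal p Q n n" for x
      using ghost_ideal_tind[OF ideal, of x] ghost_ideal_tjnd[OF p ideal, of x] that same_below
      by (simp_all add: tind_def)
  qed
  show "ghost_ideal p Q (Suc n) (Suc n) \<subseteq> Sset p (Suc n) (ghost_ideal p Q n n)"
    unfolding Sset_def
  proof (rule Inter_greatest, safe)
    fix J a
    assume J: "rideal p (Suc n) J"
      and gens: "tind (Suc n) (Suc n - 1) ` ghost_ideal p Q n n \<union> tjnd p (Suc n) (Suc n - 1) ` ghost_ideal p Q n n \<subseteq> J"
      and a: "a \<in> ghost_ideal p Q (Suc n) (Suc n)"
    let ?x = "basis_elt (a (Suc n)) n"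
    have "ghost p (Suc n) (Suc n) a \<in> Q" using a by (simp add: ghost_ideal_def)
    then have "tjnd p (Suc n) n ?x \<in> J"
      using gens basis_elt_mem_ghost_ideal by (auto simp: ghost_top)
    moreover have "(\<lambda>j. a j - tjnd p (Suc n) n ?x j) \<in> J"
      using gens ghost_ideal_top_decomposition[OF p Q pQ a] by (auto simp: tind_def)
    ultimately have "(\<lambda>j. (a j - tjnd p (Suc n) n ?x j) + tjnd p (Suc n) n ?x j) \<in> J"
      using rideal_add[OF J] by blast
    then show "a \<in> J" by simp
  qed
qed

lemma Sop_ghost_tideal:
  assumes "prime p" "int_prime_ideal Q" "int p \<notin> Q"
  shows "Sop p (ghost_tideal p Q n n) = ghost_tideal p Q (Suc n) (Suc n)"
  unfolding Sop_def last_ghost_tideal length_ghost_tideal Sset_ghost_ideal[OF assms]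
  by (rule ghost_tideal_snoc) (rule ghost_ideal_index_above; simp)

lemma qid_eq_ghost_tideal: "qid q = ghost_tideal p {x. int q dvd x} 0 0"
  by (simp add: qid_def ghost_tideal_def ghost_ideal_def ghost_top)

lemma zero_tideal_eq_ghost_tideal:
  assumes p: "p > 0"
  shows "zero_tideal r = ghost_tideal p {0} r r"
proof (rule nth_equalityI)
  show "length (zero_tideal r) = length (ghost_tideal p {0} r r)" by (simp add: zero_tideal_def)
  fix k assume "k < length (zero_tideal r)"
  then have k: "k \<le> r" by (simp add: zero_tideal_def)
  have "ghost_ideal p {0} r k = {zero_elt}"
  proof safe
    show "zero_elt \<in> ghost_ideal p {0} r k"
      using ghost_ideal_rideal[OF int_prime_ideal_imp_ideal[OF int_prime_ideal_zero]] by (simp add: rideal_def)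
    fix a assume a: "a \<in> ghost_ideal p {0} r k"
    show "a = zero_elt"
      by (rule ghost_eqI[OF p ghost_ideal_elt[OF a]])
        (use a k in \<open>simp_all add: ghost_ideal_def ghost_def elt_def zero_elt_def\<close>)
  qed
  then show "zero_tideal r ! k = ghost_tideal p {0} r r ! k"
    using k by (simp add: zero_tideal_def nth_ghost_tideal del: replicate_Suc)
qed

lemma std_chain_eq_ghost_tideal:
  assumes p: "prime p" and q: "prime q" "q \<noteq> p" and j: "1 \<le> j" "j \<le> r + 1"
  shows "std_chain p r q j = ghost_tideal p {x. int q dvd x} (r + 1 - j) r"
proof -
  have "int p \<notin> {x. int q dvd x}"
    using p q by (auto dest: primes_dvd_imp_eq)
  then have "(Sop p ^^ s) (qid q) = ghost_tideal p {x. int q dvd x} s s" for s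
    using Sop_ghost_tideal[OF p int_prime_ideal_multiples[OF q(1)]]
    by (induction s) (simp_all add: qid_eq_ghost_tideal)
  moreover have "(Lop p ^^ t) (ghost_tideal p Q s s) = ghost_tideal p Q s (s + t)" for t s Q
    by (induction t) (simp_all add: Lop_ghost_tideal)
  ultimately show ?thesis using j by (simp add: std_chain_def)
qed

text \<open>\<open>spike p i = p X\<^sub>i\<^sub>,\<^sub>i - X\<^sub>i\<^sub>,\<^sub>i\<^sub>-\<^sub>1\<close> separates \<open>P(Q,i-1)\<close> from \<open>P(Q,i)\<close> when \<open>p \<notin> Q\<close>.\<close>

definition spike :: "nat \<Rightarrow> nat \<Rightarrow> nat \<Rightarrow> int" where
  "spike p i = (\<lambda>j. if j = i then int p else if Suc j = i then -1 else 0)"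

lemma spike_elt: "spike p i \<in> elt i"
  by (simp add: spike_def elt_def)

lemma ghost_spike:
  assumes "t \<le> i"
  shows "ghost p i t (spike p i) = (if t = i then int p else 0)"
proof (cases "t = i")
  case False
  then obtain m where m: "i = Suc m" "t \<le> m" using assms by (cases i) auto
  have "ghost p m t (spike p i) = (\<Sum>s\<in>{t..m}. if s = m then -1 else 0)"
    unfolding ghost_def by (rule sum.cong) (auto simp: spike_def m)
  also have "\<dots> = -1" using m by simp
  finally have "ghost p m t (spike p i) = -1" .
  then show ?thesis using m False by (simp add: ghost_Suc_level spike_def)
qed (simp add: ghost_top spike_def)

lemma spike_mem_ghost_ideal: "1 \<le> i \<Longrightarrow> int_ideal Q \<Longrightarrow> spike p i \<in> ghost_ideal p Q (i - 1) i"
  by (auto simp: ghost_ideal_def spike_elt ghost_spike int_ideal_zero)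

lemma spike_not_mem_ghost_ideal: "1 \<le> i \<Longrightarrow> i \<le> i' \<Longrightarrow> int p \<notin> Q \<Longrightarrow> spike p i \<notin> ghost_ideal p Q i' i"
  by (auto simp: ghost_ideal_def ghost_spike)

lemma tsubset_ghost_tideal_iff:
  "tsubset (ghost_tideal p Q i n) (ghost_tideal p Q' i' n) \<longleftrightarrow>
    (\<forall>k \<le> n. ghost_ideal p Q i k \<subseteq> ghost_ideal p Q' i' k)"
  by (simp add: tsubset_def nth_ghost_tideal less_Suc_eq_le)

lemma ghost_ideal_mono: "Q \<subseteq> Q' \<Longrightarrow> ghost_ideal p Q i k \<subseteq> ghost_ideal p Q' i k"
  by (auto simp: ghost_ideal_def)

lemma ghost_tideal_index_psubset:
  assumes "int_ideal Q" "int p \<notin> Q" "1 \<le> i" "i \<le> n"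
  shows "tpsubset (ghost_tideal p Q i n) (ghost_tideal p Q (i - 1) n)"
proof -
  have "spike p i \<in> ghost_tideal p Q (i - 1) n ! i" "spike p i \<notin> ghost_tideal p Q i n ! i"
    using spike_mem_ghost_ideal[of i Q p] spike_not_mem_ghost_ideal[of i i p Q] assms
    by (simp_all add: nth_ghost_tideal)
  moreover have "tsubset (ghost_tideal p Q i n) (ghost_tideal p Q (i - 1) n)"
    by (simp add: tsubset_ghost_tideal_iff ghost_ideal_antimono)
  ultimately show ?thesis unfolding tpsubset_def by metis
qed

lemma ghost_tideal_zero_psubset:
  assumes "int_ideal Q" "Q \<noteq> {0}"
  shows "tpsubset (ghost_tideal p {0} i n) (ghost_tideal p Q i n)"
proof -
  obtain c where "c \<in> Q" "c \<noteq> 0" using assms int_ideal_zero by blast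
  then have "basis_elt c 0 \<in> ghost_tideal p Q i n ! 0" "basis_elt c 0 \<notin> ghost_tideal p {0} i n ! 0"
    by (simp_all add: nth_ghost_tideal ghost_ideal_def basis_elt_elt ghost_basis_elt)
  moreover have "tsubset (ghost_tideal p {0} i n) (ghost_tideal p Q i n)"
    using assms by (simp add: tsubset_ghost_tideal_iff ghost_ideal_mono int_ideal_zero)
  ultimately show ?thesis unfolding tpsubset_def by metis
qed

lemma std_chain_prime_chain:
  assumes p: "prime p" and q: "prime q" "q \<noteq> p"
  shows "prime_chain p r (std_chain p r q) (r + 1)"
  unfolding prime_chain_def
proof (intro conjI allI impI)
  let ?Q = "{x. int q dvd x}"
  have Q: "int_prime_ideal ?Q" by (rule int_prime_ideal_multiples[OF q(1)])
  have pQ: "int p \<notin> ?Q" using p q by (auto dest: primes_dvd_imp_eq)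
  have "int q \<in> ?Q" "int q \<noteq> 0" using q(1) by auto
  then have Q0: "?Q \<noteq> {0}" by blast
  have chain0: "std_chain p r q 0 = ghost_tideal p {0} r r"
    using zero_tideal_eq_ghost_tideal[OF prime_gt_0_nat[OF p]] by (simp add: std_chain_def)
  note chain = std_chain_eq_ghost_tideal[OF p q]
  fix j
  show "tprime p r (std_chain p r q j)" if "j \<le> r + 1"
  proof (cases "j = 0")
    case True
    then show ?thesis using chain0 ghost_tideal_tprime[OF p int_prime_ideal_zero] by simp
  next
    case False
    then show ?thesis using that chain[of j] ghost_tideal_tprime[OF p Q] by simp
  qed
  show "tpsubset (std_chain p r q j) (std_chain p r q (Suc j))" if "j < r + 1"
  proof (cases "j = 0")
    case True
    then show ?thesis
      using chain0 chain[of 1] ghost_tideal_zero_psubset[OF int_prime_ideal_imp_ideal[OF Q] Q0] by simp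
  next
    case False
    have "r + 1 - Suc j = r + 1 - j - 1" by simp
    then show ?thesis
      using that False chain[of j] chain[of "Suc j"]
        ghost_tideal_index_psubset[OF int_prime_ideal_imp_ideal[OF Q] pQ, of "r + 1 - j" r]
      by simp
  qed
qed

section \<open>Every prime ideal is some \<open>P(Q,i)\<close>\<close>

lemma tideal_take:
  assumes P: "tideal p (Suc m) P"
  shows "tideal p m (take (Suc m) P)"
  unfolding tideal_def
proof (intro conjI allI impI ballI)
  show "length (take (Suc m) P) = Suc m" using P by (simp add: tideal_def)
  show "rideal p k (take (Suc m) P ! k)" if "k \<le> m" for k
    using P that by (simp add: tideal_def)
next
  fix k assume "k \<in> {1..m}"
  then have "k \<in> {1..Suc m}" "k - 1 < Suc m" "k < Suc m" by auto
  then show "tind k (k - 1) ` (take (Suc m) P ! (k - 1)) \<subseteq> take (Suc m) P ! k"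
    and "tres p k (k - 1) ` (take (Suc m) P ! k) \<subseteq> take (Suc m) P ! (k - 1)"
    and "tjnd p k (k - 1) ` (take (Suc m) P ! (k - 1)) \<subseteq> take (Suc m) P ! k"
    using P unfolding tideal_def by simp_all
qed

lemma tprime_take:
  assumes P: "tprime p (Suc m) P"
  shows "tprime p m (take (Suc m) P)"
  unfolding tprime_def
proof (intro conjI allI impI ballI)
  show "tideal p m (take (Suc m) P)" using P by (simp add: tprime_def tideal_take)
  show "take (Suc m) P ! 0 \<noteq> elt 0" using P by (simp add: tprime_def)
  fix k l a b assume k: "k \<le> m" and l: "l \<le> k" and a: "a \<in> elt k" and b: "b \<in> elt l"
    and prod: "\<forall>i\<le>k. \<forall>j\<le>l. rmult p (max i j) (tjnd p (max i j) i (tres p k i a))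
      (tjnd p (max i j) j (tres p l j b)) \<in> take (Suc m) P ! (max i j)"
  have "\<forall>i\<le>k. \<forall>j\<le>l. rmult p (max i j) (tjnd p (max i j) i (tres p k i a))
      (tjnd p (max i j) j (tres p l j b)) \<in> P ! (max i j)"
  proof (intro allI impI)
    fix i j assume "i \<le> k" "j \<le> l"
    moreover have "max i j < Suc m" using calculation k l by simp
    ultimately show "rmult p (max i j) (tjnd p (max i j) i (tres p k i a))
      (tjnd p (max i j) j (tres p l j b)) \<in> P ! (max i j)"
      using prod by (metis nth_take)
  qed
  then have "a \<in> P ! k \<or> b \<in> P ! l" using P k l a b unfolding tprime_def by simp
  then show "a \<in> take (Suc m) P ! k \<or> b \<in> take (Suc m) P ! l" using k l by simp
qed

lemma tprimeD:
  assumes "tprime p n P" "k \<le> n" "l \<le> k" "a \<in> elt k" "b \<in> elt l"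
    "\<And>i j. i \<le> k \<Longrightarrow> j \<le> l \<Longrightarrow> rmult p (max i j) (tjnd p (max i j) i (tres p k i a))
          (tjnd p (max i j) j (tres p l j b)) \<in> P ! (max i j)"
  shows "a \<in> P ! k \<or> b \<in> P ! l"
  using assms unfolding tprime_def by blast

lemma tjnd_trans:
  assumes p: "prime p" and "i \<le> m" "m \<le> l"
  shows "tjnd p l m (tjnd p m i a) = tjnd p l i a"
proof (rule ghost_eqI[where p=p and k=l])
  show "p > 0" using p by (simp add: prime_gt_0_nat)
  show "tjnd p l m (tjnd p m i a) \<in> elt l" "tjnd p l i a \<in> elt l"
    using assms by (simp_all add: tjnd_elt)
  fix u assume u: "u \<le> l"
  have "(m - max (min u m) i) + (l - max u m) = l - max u i"
    using assms by (auto simp: min_def max_def)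
  then have "p ^ (m - max (min u m) i) * p ^ (l - max u m) = p ^ (l - max u i)"
    by (metis power_add)
  then show "ghost p l u (tjnd p l m (tjnd p m i a)) = ghost p l u (tjnd p l i a)"
    using assms u by (simp add: ghost_tjnd power_mult[symmetric] min.assoc)
qed

lemma rmult_spike:
  assumes "p > 0" "a \<in> elt k"
  shows "rmult p k a (spike p k) = (\<lambda>j. a k * spike p k j)"
proof (rule ghost_eqI[where k=k])
  show "(\<lambda>j. a k * spike p k j) \<in> elt k" using spike_elt[of p k] by (simp add: elt_def)
  show "ghost p k t (rmult p k a (spike p k)) = ghost p k t (\<lambda>j. a k * spike p k j)" if "t \<le> k" for t
    using that assms ghost_top[of p k a] by (simp add: ghost_rmult ghost_cmult ghost_spike)
qed (use assms in \<open>simp_all add: rmult_elt\<close>)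

lemma ghost_top_elt_Suc: "a \<in> elt m \<Longrightarrow> ghost p (Suc m) (Suc m) a = 0"
  by (simp add: ghost_top elt_def)

lemma rmult_basis_elt_eq_tres:
  assumes "p > 0" "a \<in> elt (Suc m)"
  shows "rmult p (Suc m) a (basis_elt 1 m) = tres p (Suc m) m a"
proof (rule ghost_eqI[where k="Suc m"])
  show "tres p (Suc m) m a \<in> elt (Suc m)" by (rule elt_mono[OF tres_elt]) simp
  fix u assume u: "u \<le> Suc m"
  show "ghost p (Suc m) u (rmult p (Suc m) a (basis_elt 1 m)) = ghost p (Suc m) u (tres p (Suc m) m a)"
  proof (cases "u \<le> m")
    case True
    then show ?thesis
      by (simp add: ghost_rmult ghost_basis_elt_Suc ghost_Suc_level_elt tres_elt ghost_tres)
  next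
    case False
    then have "u = Suc m" using u by simp
    then show ?thesis by (simp add: ghost_rmult ghost_top_elt_Suc[OF basis_elt_elt] ghost_top_elt_Suc[OF tres_elt])
  qed
qed (use assms in \<open>simp_all add: rmult_elt\<close>)

lemma rmult_basis_elt_add_spike:
  assumes "p > 0" "a \<in> elt (Suc m)"
  shows "(\<lambda>j. rmult p (Suc m) a (basis_elt 1 m) j + rmult p (Suc m) a (spike p (Suc m)) j) = (\<lambda>j. int p * a j)"
proof (rule ghost_eqI[where k="Suc m"])
  show "(\<lambda>j. rmult p (Suc m) a (basis_elt 1 m) j + rmult p (Suc m) a (spike p (Suc m)) j) \<in> elt (Suc m)"
    using rmult_elt[of p "Suc m" a] by (simp add: elt_def)
  show "(\<lambda>j. int p * a j) \<in> elt (Suc m)" using assms by (simp add: elt_def)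
  fix t assume t: "t \<le> Suc m"
  then show "ghost p (Suc m) t (\<lambda>j. rmult p (Suc m) a (basis_elt 1 m) j + rmult p (Suc m) a (spike p (Suc m)) j)
    = ghost p (Suc m) t (\<lambda>j. int p * a j)"
    by (cases "t = Suc m")
      (simp_all add: ghost_add ghost_rmult ghost_cmult ghost_spike ghost_basis_elt_Suc ghost_top_elt_Suc[OF basis_elt_elt])
qed (use assms in simp)

lemma tjnd_spike:
  assumes p: "prime p" and m: "1 \<le> m"
  shows "(\<lambda>j. tjnd p (Suc m) m (spike p m) j - int p ^ (p - 2) * spike p m j) = spike p (Suc m)"
proof (rule ghost_eqI[where p=p and k="Suc m"])
  show "p > 0" using p by (simp add: prime_gt_0_nat)
  show "(\<lambda>j. tjnd p (Suc m) m (spike p m) j - int p ^ (p - 2) * spike p m j) \<in> elt (Suc m)"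
    using tjnd_elt[of m "Suc m" p "spike p m"] spike_elt[of p m] by (simp add: elt_def)
  show "spike p (Suc m) \<in> elt (Suc m)" by (rule spike_elt)
  have pp: "int p ^ (p - 2) * (int p * int p) = int p ^ p"
    using prime_ge_2_nat[OF p] by (simp add: power_Suc2[symmetric] mult.assoc[symmetric] Suc_diff_Suc numeral_2_eq_2)
  fix u assume u: "u \<le> Suc m"
  consider "u < m" | "u = m" | "u = Suc m" using u by linarith
  then show "ghost p (Suc m) u (\<lambda>j. tjnd p (Suc m) m (spike p m) j - int p ^ (p - 2) * spike p m j)
    = ghost p (Suc m) u (spike p (Suc m))"
    using m u prime_gt_0_nat[OF p] pp
    by cases (simp_all add: ghost_diff ghost_cmult ghost_tjnd[OF p] ghost_spike ghost_Suc_level_elt[OF spike_elt]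
        ghost_top_elt_Suc[OF spike_elt] min_def max_def)
qed

lemma tjnd_basis_elt:
  assumes p: "prime p"
  shows "(\<lambda>j. int p * tjnd p (Suc m) m (basis_elt c m) j - basis_elt (c ^ p) m j) = (\<lambda>j. c * spike p (Suc m) j)"
proof (rule ghost_eqI[where p=p and k="Suc m"])
  show "p > 0" using p by (simp add: prime_gt_0_nat)
  show "(\<lambda>j. int p * tjnd p (Suc m) m (basis_elt c m) j - basis_elt (c ^ p) m j) \<in> elt (Suc m)"
    using tjnd_elt[of m "Suc m" p "basis_elt c m"] by (simp add: elt_def basis_elt_def)
  show "(\<lambda>j. c * spike p (Suc m) j) \<in> elt (Suc m)" using spike_elt[of p "Suc m"] by (simp add: elt_def)
  fix u assume u: "u \<le> Suc m"
  then show "ghost p (Suc m) u (\<lambda>j. int p * tjnd p (Suc m) m (basis_elt c m) j - basis_elt (c ^ p) m j)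
    = ghost p (Suc m) u (\<lambda>j. c * spike p (Suc m) j)"
    by (cases "u = Suc m")
      (simp_all add: ghost_diff ghost_cmult ghost_tjnd[OF p] ghost_spike ghost_basis_elt ghost_basis_elt_Suc
        ghost_top_elt_Suc[OF basis_elt_elt] min_def max_def)
qed

text \<open>The induction step of the classification: the lemmas of this locale pin down the top level \<open>P ! Suc m\<close>.\<close>

locale prime_extension =
  fixes p :: nat and Q :: "int set" and i m :: nat and P :: "(nat \<Rightarrow> int) set list"
  assumes prime_p: "prime p" and prime_Q: "int_prime_ideal Q" and i_le_m: "i \<le> m"
    and tprime_P: "tprime p (Suc m) P"
    and P_lower: "\<And>k. k \<le> m \<Longrightarrow> P ! k = ghost_ideal p Q i k"
begin

lemma p_pos: "p > 0"
  using prime_p by (simp add: prime_gt_0_nat)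

lemma ideal_Q: "int_ideal Q"
  using prime_Q by (rule int_prime_ideal_imp_ideal)

lemma rideal_top: "rideal p (Suc m) (P ! Suc m)"
  using tprime_P by (simp add: tprime_def tideal_def)

lemma top_step:
  "tind (Suc m) m ` (P ! m) \<subseteq> P ! Suc m \<and> tres p (Suc m) m ` (P ! Suc m) \<subseteq> P ! m
     \<and> tjnd p (Suc m) m ` (P ! m) \<subseteq> P ! Suc m"
  using tprime_P unfolding tprime_def tideal_def
  by (metis atLeastAtMost_iff diff_Suc_1 le_add1 le_refl plus_1_eq_Suc)

lemma lower_in_top: "x \<in> ghost_ideal p Q i m \<Longrightarrow> x \<in> P ! Suc m"
  using top_step P_lower[of m] by (auto simp: tind_def)

lemma tres_top: "a \<in> P ! Suc m \<Longrightarrow> tres p (Suc m) m a \<in> ghost_ideal p Q i m"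
  using top_step P_lower[of m] by auto

lemma tjnd_lower_in_top: "x \<in> ghost_ideal p Q i m \<Longrightarrow> tjnd p (Suc m) m x \<in> P ! Suc m"
  using top_step P_lower[of m] by auto

lemma top_subset_ghost_ideal: "P ! Suc m \<subseteq> ghost_ideal p Q i (Suc m)"
proof
  fix a assume a: "a \<in> P ! Suc m"
  show "a \<in> ghost_ideal p Q i (Suc m)" unfolding mem_ghost_ideal
  proof (intro conjI allI impI)
    show "a \<in> elt (Suc m)" using rideal_top a by (rule rideal_elt)
    fix t assume "t \<le> min (Suc m) i"
    then have "t \<le> min m i" using i_le_m by simp
    then show "ghost p (Suc m) t a \<in> Q"
      using tres_top[OF a] by (simp add: ghost_ideal_def ghost_tres)
  qed
qed

lemma tjnd_tres_in_top:
  assumes a: "a \<in> ghost_ideal p Q i (Suc m)" and j: "j \<le> m"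
  shows "tjnd p (Suc m) j (tres p (Suc m) j a) \<in> P ! Suc m"
proof -
  have "tjnd p m j (tres p (Suc m) j a) \<in> ghost_ideal p Q i m"
    by (rule ghost_ideal_tjnd_tres[OF prime_p ideal_Q a]) (use j in auto)
  from tjnd_lower_in_top[OF this] show ?thesis
    using tjnd_trans[OF prime_p j, of "Suc m"] by simp
qed

lemma tprime_product_in_lower:
  assumes a: "a \<in> ghost_ideal p Q i (Suc m)" and "i' \<le> Suc m" "j \<le> l" and M: "max i' j \<le> m"
  shows "rmult p (max i' j) (tjnd p (max i' j) i' (tres p (Suc m) i' a)) (tjnd p (max i' j) j (tres p l j b))
     \<in> P ! max i' j"
  unfolding P_lower[OF M] mem_ghost_ideal
proof (intro conjI allI impI rmult_elt)
  fix u assume u: "u \<le> min (max i' j) i"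
  have "min u i' \<le> i" "min u i' \<le> Suc m" using u M by (simp_all add: min.coboundedI1 min.coboundedI2)
  then have "min u i' \<le> min (Suc m) i" by simp
  then have "ghost p (Suc m) (min u i') a ^ (p ^ (max i' j - max u i')) \<in> Q"
    using a p_pos by (intro int_ideal_power[OF ideal_Q]) (simp_all add: ghost_ideal_def)
  then show "ghost p (max i' j) u (rmult p (max i' j) (tjnd p (max i' j) i' (tres p (Suc m) i' a))
      (tjnd p (max i' j) j (tres p l j b))) \<in> Q"
    using assms u by (simp add: ghost_tprime_product[OF prime_p] int_ideal_mult_right[OF ideal_Q])
qed

lemma top_mult_prime:
  assumes a: "a \<in> ghost_ideal p Q i (Suc m)" and b: "b \<in> ghost_ideal p Q i (Suc m)"
    and ab: "rmult p (Suc m) a b \<in> P ! Suc m"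
  shows "a \<in> P ! Suc m \<or> b \<in> P ! Suc m"
proof (rule tprimeD[OF tprime_P])
  show a_elt: "a \<in> elt (Suc m)" and b_elt: "b \<in> elt (Suc m)"
    using a b by (simp_all add: ghost_ideal_elt)
  fix i' j assume i': "i' \<le> Suc m" and j: "j \<le> Suc m"
  consider "max i' j \<le> m" | "i' = Suc m" "j = Suc m" | "i' = Suc m" "j \<le> m" | "i' \<le> m" "j = Suc m"
    using i' j by linarith
  then show "rmult p (max i' j) (tjnd p (max i' j) i' (tres p (Suc m) i' a))
      (tjnd p (max i' j) j (tres p (Suc m) j b)) \<in> P ! max i' j"
  proof cases
    case 1
    then show ?thesis using tprime_product_in_lower[OF a i' j] by simp
  next
    case 2
    then show ?thesis using ab by (simp add: tjnd_self[OF prime_p] tres_self a_elt b_elt)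
  next
    case 3
    then show ?thesis
      using tjnd_tres_in_top[OF b] rideal_mult[OF rideal_top _ a_elt] by (simp add: tjnd_self[OF prime_p] tres_self a_elt)
  next
    case 4
    then show ?thesis
      using tjnd_tres_in_top[OF a] rideal_mult_right[OF p_pos rideal_top _ b_elt]
      by (simp add: tjnd_self[OF prime_p] tres_self b_elt max_def)
  qed
qed (simp_all)

lemma top_zero_in_top:
  assumes pQ: "int p \<notin> Q" and w: "w \<in> ghost_ideal p Q i (Suc m)" and w0: "w (Suc m) = 0"
  shows "w \<in> P ! Suc m"
proof -
  have w_elt: "w \<in> elt m"
    using ghost_ideal_elt[OF w] w0 by (rule elt_SucD)
  have "w \<in> ghost_ideal p Q i m" unfolding mem_ghost_ideal
  proof (intro conjI allI impI w_elt)
    fix t assume t: "t \<le> min m i"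
    then have "ghost p (Suc m) t w \<in> Q" using w by (simp add: ghost_ideal_def)
    then have "int p * ghost p m t w \<in> Q" using t w_elt by (simp add: ghost_Suc_level_elt)
    then show "ghost p m t w \<in> Q" using int_prime_ideal_mult[OF prime_Q] pQ by blast
  qed
  then show ?thesis by (rule lower_in_top)
qed

lemma rmult_tjnd_basis_elt_in_top:
  assumes pQ: "int p \<notin> Q" and a: "a \<in> ghost_ideal p Q i (Suc m)"
    and ca: "(\<lambda>j. c * a j) \<in> P ! Suc m"
  shows "rmult p (Suc m) a (tjnd p (Suc m) 0 (basis_elt c 0)) \<in> P ! Suc m"
    (is "rmult p (Suc m) a ?B \<in> _")
proof -
  have ghost_B: "ghost p (Suc m) u ?B = c ^ (p ^ (Suc m - u))" if "u \<le> Suc m" for u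
    using that by (simp add: ghost_tjnd[OF prime_p] ghost_basis_elt)
  define d where "d = (\<lambda>j. rmult p (Suc m) a ?B j - c * a j)"
  have "d \<in> ghost_ideal p Q i (Suc m)" unfolding mem_ghost_ideal
  proof (intro conjI allI impI)
    show "d \<in> elt (Suc m)"
      using ghost_ideal_elt[OF a] rmult_elt[of p "Suc m" a ?B] by (simp add: d_def elt_def)
    fix t assume "t \<le> min (Suc m) i"
    then have "ghost p (Suc m) t a \<in> Q" using a by (simp add: ghost_ideal_def)
    then show "ghost p (Suc m) t d \<in> Q"
      using ideal_Q by (simp add: d_def ghost_diff ghost_rmult ghost_cmult int_ideal_diff int_ideal_mult_left
          int_ideal_mult_right)
  qed
  moreover have "ghost p (Suc m) (Suc m) d = 0"
    using ghost_B[of "Suc m"] by (simp add: d_def ghost_diff ghost_rmult ghost_cmult)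
  then have "d (Suc m) = 0" by (simp add: ghost_top)
  ultimately have "d \<in> P ! Suc m" by (rule top_zero_in_top[OF pQ])
  then have "(\<lambda>j. d j + c * a j) \<in> P ! Suc m" using rideal_add[OF rideal_top _ ca] by simp
  then show ?thesis by (simp add: d_def)
qed

lemma top_cancel_scalar:
  assumes pQ: "int p \<notin> Q" and a: "a \<in> ghost_ideal p Q i (Suc m)" and c: "c \<notin> Q"
    and ca: "(\<lambda>j. c * a j) \<in> P ! Suc m"
  shows "a \<in> P ! Suc m"
proof -
  have "basis_elt c 0 \<notin> P ! 0" using P_lower[of 0] c by (simp add: ghost_ideal_def ghost_basis_elt)
  moreover have "a \<in> P ! Suc m \<or> basis_elt c 0 \<in> P ! 0"
  proof (rule tprimeD[OF tprime_P])
    show "a \<in> elt (Suc m)" using a by (rule ghost_ideal_elt)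
    fix i' j :: nat assume i': "i' \<le> Suc m" and "j \<le> 0"
    then have j: "j = 0" by simp
    show "rmult p (max i' j) (tjnd p (max i' j) i' (tres p (Suc m) i' a))
        (tjnd p (max i' j) j (tres p 0 j (basis_elt c 0))) \<in> P ! max i' j"
    proof (cases "i' \<le> m")
      case True
      then show ?thesis using tprime_product_in_lower[OF a i' le_refl[of 0], of "basis_elt c 0"] j by simp
    next
      case False
      then have "i' = Suc m" using i' by simp
      then show ?thesis
        using rmult_tjnd_basis_elt_in_top[OF pQ a ca] j ghost_ideal_elt[OF a]
        by (simp add: tjnd_self[OF prime_p] tres_self basis_elt_elt)
    qed
  qed (simp_all add: basis_elt_elt)
  ultimately show ?thesis by simp
qed

text \<open>Modulo \<open>X\<^sub>m\<^sub>+\<^sub>1\<^sub>,\<^sub>m\<close>, an element of \<open>P(Q,i)\<^sub>m\<^sub>+\<^sub>1\<close> is \<open>jnd\<close> of its top coefficient plus an element of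
  \<open>R\<^sub>m\<close> with zero top coefficient, whose ghost coordinates are all multiples of \<open>p\<close>.\<close>

lemma mem_top_if_p_mem_basis_elt_mem:
  assumes pQ: "int p \<in> Q" and X: "basis_elt 1 m \<in> P ! Suc m" and a: "a \<in> ghost_ideal p Q i (Suc m)"
  shows "a \<in> P ! Suc m"
proof -
  let ?J = "tjnd p (Suc m) m (basis_elt (a (Suc m)) m)"
  let ?r = "\<lambda>j. a j - ?J j"
  let ?low = "\<lambda>j. if j = m then 0 else ?r j"
  have "ghost p (Suc m) 0 a \<in> Q" using a by (simp add: ghost_ideal_def)
  then have "ghost p (Suc m) 0 a - int p * ghost p m 0 a \<in> Q"
    by (rule int_ideal_diff[OF ideal_Q _ int_ideal_mult_right[OF ideal_Q pQ]])
  then have "a (Suc m) \<in> Q" by (simp add: ghost_Suc_level)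
  then have J: "?J \<in> P ! Suc m"
    by (intro tjnd_lower_in_top basis_elt_mem_ghost_ideal)
  have "?low \<in> elt (Suc m)"
    using ghost_ideal_elt[OF a] tjnd_elt[of m "Suc m" p "basis_elt (a (Suc m)) m"] by (simp add: elt_def)
  moreover have "?low (Suc m) = 0" by (simp add: tjnd_def basis_elt_def)
  ultimately have low_elt: "?low \<in> elt m" by (rule elt_SucD)
  have "?low \<in> ghost_ideal p Q i m" unfolding mem_ghost_ideal
  proof (intro conjI allI impI low_elt)
    fix t
    have "int p dvd ghost p m t ?low" by (rule ghost_dvd_if_top_zero) simp
    then show "ghost p m t ?low \<in> Q" using int_ideal_mult_right[OF ideal_Q pQ] by (auto elim: dvdE)
  qed
  then have "(\<lambda>j. (?low j + ?r m * basis_elt 1 m j) + ?J j) \<in> P ! Suc m"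
    by (intro rideal_add[OF rideal_top] J lower_in_top rideal_cmult[OF p_pos rideal_top X])
  moreover have "(\<lambda>j. (?low j + ?r m * basis_elt 1 m j) + ?J j) = a"
    by (simp add: basis_elt_def fun_eq_iff)
  ultimately show ?thesis by simp
qed

lemma top_eq_if_p_mem:
  assumes pQ: "int p \<in> Q"
  shows "P ! Suc m = ghost_ideal p Q i (Suc m)"
proof
  show "P ! Suc m \<subseteq> ghost_ideal p Q i (Suc m)" by (rule top_subset_ghost_ideal)
  show "ghost_ideal p Q i (Suc m) \<subseteq> P ! Suc m"
  proof
    fix a assume a: "a \<in> ghost_ideal p Q i (Suc m)"
    have "basis_elt 1 m \<in> ghost_ideal p Q i (Suc m)"
      using pQ i_le_m by (simp add: ghost_ideal_def elt_mono[OF basis_elt_elt] ghost_basis_elt_Suc)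
    moreover have "rmult p (Suc m) a (basis_elt 1 m) \<in> P ! Suc m"
      using lower_in_top[OF ghost_ideal_tres[OF a]] ghost_ideal_elt[OF a]
      by (simp add: rmult_basis_elt_eq_tres[OF p_pos])
    ultimately have "a \<in> P ! Suc m \<or> basis_elt 1 m \<in> P ! Suc m"
      by (rule top_mult_prime[OF a])
    then show "a \<in> P ! Suc m" using mem_top_if_p_mem_basis_elt_mem[OF pQ _ a] by blast
  qed
qed

lemma top_eq_if_spike_mem:
  assumes pQ: "int p \<notin> Q" and spike: "spike p (Suc m) \<in> P ! Suc m"
  shows "P ! Suc m = ghost_ideal p Q i (Suc m)"
proof
  show "P ! Suc m \<subseteq> ghost_ideal p Q i (Suc m)" by (rule top_subset_ghost_ideal)
  show "ghost_ideal p Q i (Suc m) \<subseteq> P ! Suc m"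
  proof
    fix a assume a: "a \<in> ghost_ideal p Q i (Suc m)"
    have a_elt: "a \<in> elt (Suc m)" using a by (rule ghost_ideal_elt)
    have "rmult p (Suc m) a (basis_elt 1 m) \<in> P ! Suc m"
      using lower_in_top[OF ghost_ideal_tres[OF a]] by (simp add: rmult_basis_elt_eq_tres[OF p_pos a_elt])
    moreover have "rmult p (Suc m) a (spike p (Suc m)) \<in> P ! Suc m"
      by (rule rideal_mult[OF rideal_top spike a_elt])
    ultimately have "(\<lambda>j. rmult p (Suc m) a (basis_elt 1 m) j + rmult p (Suc m) a (spike p (Suc m)) j) \<in> P ! Suc m"
      by (rule rideal_add[OF rideal_top])
    then have "(\<lambda>j. int p * a j) \<in> P ! Suc m"
      by (simp add: rmult_basis_elt_add_spike[OF p_pos a_elt])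
    then show "a \<in> P ! Suc m" by (rule top_cancel_scalar[OF pQ a pQ])
  qed
qed

lemma spike_mem_top_if_less:
  assumes "i < m"
  shows "spike p (Suc m) \<in> P ! Suc m"
proof -
  have m: "1 \<le> m" using assms by simp
  have "i \<le> m - 1" using assms by simp
  then have "spike p m \<in> ghost_ideal p Q i m"
    using spike_mem_ghost_ideal[OF m ideal_Q] ghost_ideal_antimono by blast
  then have "tjnd p (Suc m) m (spike p m) \<in> P ! Suc m" "(\<lambda>j. int p ^ (p - 2) * spike p m j) \<in> P ! Suc m"
    by (simp_all add: tjnd_lower_in_top lower_in_top rideal_cmult[OF p_pos ghost_ideal_rideal[OF ideal_Q]])
  then have "(\<lambda>j. tjnd p (Suc m) m (spike p m) j - int p ^ (p - 2) * spike p m j) \<in> P ! Suc m"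
    by (rule rideal_diff[OF rideal_top])
  then show ?thesis by (simp add: tjnd_spike[OF prime_p m])
qed

lemma cmult_spike_in_top:
  assumes "i = m" and c: "c \<in> Q"
  shows "(\<lambda>j. c * spike p (Suc m) j) \<in> P ! Suc m"
proof -
  have "c ^ p \<in> Q" using int_ideal_power[OF ideal_Q c] p_pos by simp
  then have "tjnd p (Suc m) m (basis_elt c m) \<in> P ! Suc m" "basis_elt (c ^ p) m \<in> P ! Suc m"
    using c by (simp_all add: tjnd_lower_in_top lower_in_top basis_elt_mem_ghost_ideal)
  then have "(\<lambda>j. int p * tjnd p (Suc m) m (basis_elt c m) j - basis_elt (c ^ p) m j) \<in> P ! Suc m"
    by (intro rideal_diff[OF rideal_top] rideal_cmult[OF p_pos rideal_top])
  then show ?thesis by (simp add: tjnd_basis_elt[OF prime_p])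
qed

lemma top_eq_if_spike_not_mem:
  assumes pQ: "int p \<notin> Q" and "i = m" and spike: "spike p (Suc m) \<notin> P ! Suc m"
  shows "P ! Suc m = ghost_ideal p Q (Suc m) (Suc m)"
proof -
  have spike_mem: "spike p (Suc m) \<in> ghost_ideal p Q i (Suc m)"
    using spike_mem_ghost_ideal[of "Suc m" Q p] ideal_Q ghost_ideal_antimono[OF i_le_m, of p Q "Suc m"] by auto
  have "a \<in> P ! Suc m \<longleftrightarrow> a \<in> ghost_ideal p Q (Suc m) (Suc m)" if a: "a \<in> ghost_ideal p Q i (Suc m)" for a
  proof -
    have a_elt: "a \<in> elt (Suc m)" using a by (rule ghost_ideal_elt)
    have top: "a \<in> ghost_ideal p Q (Suc m) (Suc m) \<longleftrightarrow> a (Suc m) \<in> Q"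
      using a \<open>i = m\<close> by (auto simp: ghost_ideal_def ghost_top le_Suc_eq)
    have "a \<in> P ! Suc m \<longleftrightarrow> rmult p (Suc m) a (spike p (Suc m)) \<in> P ! Suc m"
      using top_mult_prime[OF a spike_mem] spike rideal_mult_right[OF p_pos rideal_top _ spike_elt] by blast
    also have "\<dots> \<longleftrightarrow> a (Suc m) \<in> Q"
      using top_cancel_scalar[OF pQ spike_mem, of "a (Suc m)"] spike cmult_spike_in_top[OF \<open>i = m\<close>]
      by (auto simp: rmult_spike[OF p_pos a_elt])
    finally show ?thesis using top by simp
  qed
  moreover have "ghost_ideal p Q (Suc m) (Suc m) \<subseteq> ghost_ideal p Q i (Suc m)"
    using i_le_m by (intro ghost_ideal_antimono) simp
  ultimately show ?thesis using top_subset_ghost_ideal by blast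
qed

lemma top_cases:
  "P ! Suc m = ghost_ideal p Q i (Suc m) \<or> (i = m \<and> P ! Suc m = ghost_ideal p Q (Suc m) (Suc m))"
proof (cases "int p \<in> Q")
  case True
  then show ?thesis using top_eq_if_p_mem by simp
next
  case pQ: False
  show ?thesis
  proof (cases "spike p (Suc m) \<in> P ! Suc m")
    case True
    then show ?thesis using top_eq_if_spike_mem[OF pQ] by simp
  next
    case False
    then have "i = m" using spike_mem_top_if_less i_le_m by fastforce
    then show ?thesis using top_eq_if_spike_not_mem[OF pQ _ False] by simp
  qed
qed

end

lemma elt_zero_eq_basis_elt: "a \<in> elt 0 \<Longrightarrow> a = basis_elt (a 0) 0"
  by (auto simp: basis_elt_def elt_def)

lemma rideal_zero_eq_ghost_ideal:
  assumes p: "p > 0" and I: "rideal p 0 I"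
  shows "int_ideal {c. basis_elt c 0 \<in> I}" and "I = ghost_ideal p {c. basis_elt c 0 \<in> I} 0 0"
proof -
  show "int_ideal {c. basis_elt c 0 \<in> I}" unfolding int_ideal_def
  proof (intro conjI ballI allI; clarify)
    have "basis_elt 0 0 = zero_elt" by (simp add: basis_elt_def zero_elt_def fun_eq_iff)
    then show "basis_elt 0 0 \<in> I" using I by (simp add: rideal_def)
  next
    fix x y assume "basis_elt x 0 \<in> I" "basis_elt y 0 \<in> I"
    then have "(\<lambda>j. basis_elt x 0 j + basis_elt y 0 j) \<in> I" by (rule rideal_add[OF I])
    then show "basis_elt (x + y) 0 \<in> I" by (simp add: basis_elt_def if_distrib cong: if_cong)
  next
    fix x c assume "basis_elt x 0 \<in> I"
    then have "(\<lambda>j. c * basis_elt x 0 j) \<in> I" by (rule rideal_cmult[OF p I])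
    then show "basis_elt (c * x) 0 \<in> I" by (simp add: basis_elt_def if_distrib cong: if_cong)
  qed
  show "I = ghost_ideal p {c. basis_elt c 0 \<in> I} 0 0"
    using rideal_elt[OF I] elt_zero_eq_basis_elt by (fastforce simp: ghost_ideal_def ghost_top)
qed

lemma tprime_zero_eq_ghost_tideal:
  assumes p: "prime p" and P: "tprime p 0 P"
  obtains Q where "int_prime_ideal Q" "P = ghost_tideal p Q 0 0"
proof -
  have p0: "p > 0" using p by (simp add: prime_gt_0_nat)
  have I: "rideal p 0 (P ! 0)" and len: "length P = 1" using P by (simp_all add: tprime_def tideal_def)
  define Q where "Q = {c. basis_elt c 0 \<in> P ! 0}"
  note Q_ideal = rideal_zero_eq_ghost_ideal(1)[OF p0 I, folded Q_def]
  have P0: "P ! 0 = ghost_ideal p Q 0 0"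
    unfolding Q_def by (rule rideal_zero_eq_ghost_ideal(2)[OF p0 I])
  have "int_prime_ideal Q" unfolding int_prime_ideal_def
  proof (intro conjI allI impI Q_ideal)
    show "1 \<notin> Q"
    proof
      assume "1 \<in> Q"
      then have one: "basis_elt 1 0 \<in> P ! 0" by (simp add: Q_def)
      have "a \<in> P ! 0" if "a \<in> elt 0" for a
      proof -
        have "(\<lambda>j. a 0 * basis_elt 1 0 j) = a" using that by (auto simp: basis_elt_def elt_def)
        then show ?thesis using rideal_cmult[OF p0 I one, of "a 0"] by simp
      qed
      then have "P ! 0 = elt 0" using rideal_elt[OF I] by blast
      then show False using P by (simp add: tprime_def)
    qed
    fix x y assume "x * y \<in> Q"
    moreover have "rmult p 0 (basis_elt x 0) (basis_elt y 0) = basis_elt (x * y) 0"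
      using rmult_basis_elt[OF p0 basis_elt_elt] by (simp add: basis_elt_def fun_eq_iff)
    ultimately have "rmult p 0 (tjnd p 0 0 (tres p 0 0 (basis_elt x 0))) (tjnd p 0 0 (tres p 0 0 (basis_elt y 0))) \<in> P ! 0"
      by (simp add: Q_def tjnd_self[OF p] tres_self basis_elt_elt)
    then have "basis_elt x 0 \<in> P ! 0 \<or> basis_elt y 0 \<in> P ! 0"
      by (intro tprimeD[OF P order.refl order.refl basis_elt_elt basis_elt_elt]) simp
    then show "x \<in> Q \<or> y \<in> Q" by (simp add: Q_def)
  qed
  moreover have "P = ghost_tideal p Q 0 0"
    using len P0 by (cases P) (simp_all add: ghost_tideal_def)
  ultimately show thesis by (rule that)
qed

theorem tprime_eq_ghost_tideal:
  assumes p: "prime p" and P: "tprime p n P"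
  shows "\<exists>Q i. int_prime_ideal Q \<and> i \<le> n \<and> P = ghost_tideal p Q i n"
  using P
proof (induction n arbitrary: P)
  case 0
  then show ?case using tprime_zero_eq_ghost_tideal[OF p] by blast
next
  case (Suc m P)
  have len: "length P = Suc (Suc m)" using Suc.prems by (simp add: tprime_def tideal_def)
  obtain Q i where Q: "int_prime_ideal Q" and i: "i \<le> m" and low: "take (Suc m) P = ghost_tideal p Q i m"
    using Suc.IH[OF tprime_take[OF Suc.prems]] by blast
  have "P ! k = ghost_ideal p Q i k" if "k \<le> m" for k
    using that nth_take[of k "Suc m" P] low by (simp add: nth_ghost_tideal)
  then interpret prime_extension p Q i m P
    using p Q i Suc.prems by unfold_locales
  have P_snoc: "P = ghost_tideal p Q i m @ [P ! Suc m]"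
    using take_Suc_conv_app_nth[of "Suc m" P] len low by simp
  from top_cases show ?case
  proof
    assume "P ! Suc m = ghost_ideal p Q i (Suc m)"
    then have "P = ghost_tideal p Q i (Suc m)" using P_snoc ghost_tideal_snoc[of m p Q i i] by simp
    then show ?thesis using Q i le_SucI by blast
  next
    assume "i = m \<and> P ! Suc m = ghost_ideal p Q (Suc m) (Suc m)"
    then have "P = ghost_tideal p Q (Suc m) (Suc m)"
      using P_snoc ghost_tideal_snoc[of m p Q i "Suc m"] ghost_ideal_index_above[of _ m "Suc m" p Q] by auto
    then show ?thesis using Q by blast
  qed
qed

section \<open>Length of chains of prime ideals\<close>

lemma int_ideal_diff_mem_iff: "int_ideal Q \<Longrightarrow> x - y \<in> Q \<Longrightarrow> x \<in> Q \<longleftrightarrow> y \<in> Q"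
  using int_ideal_add[of Q "x - y" y] int_ideal_diff[of Q x "x - y"] by auto

lemma ghost_ideal_if_p_mem:
  assumes Q: "int_ideal Q" and pQ: "int p \<in> Q"
  shows "ghost_ideal p Q i k = {a \<in> elt k. ghost p k 0 a \<in> Q}"
proof -
  have "ghost p k t a \<in> Q \<longleftrightarrow> ghost p k 0 a \<in> Q" if t: "t \<le> k" for t a
  proof -
    obtain w where "ghost p k 0 a - ghost p k t a = int p * w"
      using ghost_cong_start[OF t, of p a] by (elim dvdE)
    then have "ghost p k 0 a - ghost p k t a \<in> Q" using int_ideal_mult_right[OF Q pQ] by simp
    then show ?thesis using int_ideal_diff_mem_iff[OF Q] by blast
  qed
  then have "(\<forall>t \<le> min k i. ghost p k t a \<in> Q) \<longleftrightarrow> ghost p k 0 a \<in> Q" for a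
    by (metis le0 min.bounded_iff)
  then show ?thesis by (simp add: ghost_ideal_def)
qed

definition ghost_height :: "nat \<Rightarrow> nat \<Rightarrow> int set \<Rightarrow> nat \<Rightarrow> nat" where
  "ghost_height p n Q i = (if Q = {0} then 0 else 1) + (if int p \<in> Q then n else n - i)"

lemma ghost_height_le: "ghost_height p n Q i \<le> n + 1"
  unfolding ghost_height_def by auto

lemma ghost_tideal_tsubset_imp_subset:
  assumes "tsubset (ghost_tideal p Q i n) (ghost_tideal p Q' i' n)"
  shows "Q \<subseteq> Q'"
proof
  fix c assume "c \<in> Q"
  then have "basis_elt c 0 \<in> ghost_tideal p Q i n ! 0" by (simp add: nth_ghost_tideal basis_elt_mem_ghost_ideal)
  then have "basis_elt c 0 \<in> ghost_tideal p Q' i' n ! 0" using assms by (auto simp: tsubset_def)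
  then show "c \<in> Q'" by (simp add: nth_ghost_tideal ghost_ideal_def ghost_basis_elt)
qed

lemma ghost_tideal_tsubset_imp_index_le:
  assumes Q: "int_ideal Q" and pQ': "int p \<notin> Q'" and i': "i' \<le> n"
    and sub: "tsubset (ghost_tideal p Q i n) (ghost_tideal p Q' i' n)"
  shows "i' \<le> i"
proof (rule ccontr)
  assume "\<not> i' \<le> i"
  then have "1 \<le> i'" "i \<le> i' - 1" by auto
  then have "spike p i' \<in> ghost_ideal p Q i i'"
    using spike_mem_ghost_ideal[OF \<open>1 \<le> i'\<close> Q] ghost_ideal_antimono[OF \<open>i \<le> i' - 1\<close>] by blast
  moreover have "ghost_ideal p Q i i' \<subseteq> ghost_ideal p Q' i' i'"
    using sub i' by (simp add: tsubset_ghost_tideal_iff)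
  ultimately have "spike p i' \<in> ghost_ideal p Q' i' i'" by blast
  then show False using spike_not_mem_ghost_ideal[OF \<open>1 \<le> i'\<close> order.refl pQ'] by simp
qed

lemma ghost_height_strict_mono:
  assumes p: "prime p" and Q: "int_prime_ideal Q" and Q': "int_prime_ideal Q'" and i: "i \<le> n" and i': "i' \<le> n"
    and sub: "tpsubset (ghost_tideal p Q i n) (ghost_tideal p Q' i' n)"
  shows "ghost_height p n Q i < ghost_height p n Q' i'"
proof -
  have tsub: "tsubset (ghost_tideal p Q i n) (ghost_tideal p Q' i' n)"
    and ne: "ghost_tideal p Q i n \<noteq> ghost_tideal p Q' i' n" using sub by (simp_all add: tpsubset_def)
  have QQ': "Q \<subseteq> Q'" by (rule ghost_tideal_tsubset_imp_subset[OF tsub])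
  have index: "int p \<notin> Q' \<Longrightarrow> i' \<le> i"
    using ghost_tideal_tsubset_imp_index_le[OF int_prime_ideal_imp_ideal[OF Q] _ i' tsub] by blast
  have p0: "int p \<noteq> 0" using p by (simp add: prime_gt_0_nat)
  have index_ne: "Q' = Q \<Longrightarrow> i' \<noteq> i" using ne by auto
  show ?thesis
  proof (cases "Q = {0}")
    case True
    then have height: "ghost_height p n Q i = n - i" using p0 by (simp add: ghost_height_def)
    show ?thesis
    proof (cases "int p \<in> Q'")
      case True
      then have "Q' \<noteq> {0}" using p0 by auto
      then show ?thesis unfolding height using True by (simp add: ghost_height_def)
    next
      case False
      then have "i' \<le> i" by (rule index)
      moreover have "Q' = {0} \<Longrightarrow> i' \<noteq> i" using index_ne \<open>Q = {0}\<close> by simp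
      ultimately show ?thesis unfolding height using False i by (auto simp: ghost_height_def)
    qed
  next
    case False
    then have "Q' = Q" by (rule int_prime_ideal_maximal[OF Q _ Q' QQ'])
    moreover have "int p \<notin> Q"
    proof
      assume pQ: "int p \<in> Q"
      then have "ghost_tideal p Q i n = ghost_tideal p Q' i' n"
        using \<open>Q' = Q\<close> ghost_ideal_if_p_mem[OF int_prime_ideal_imp_ideal[OF Q] pQ]
        by (intro ghost_tideal_eqI) simp
      then show False using ne by simp
    qed
    moreover have "i' < i" using index_ne index calculation by fastforce
    ultimately show ?thesis using i False by (simp add: ghost_height_def)
  qed
qed

lemma prime_chain_length_le:
  assumes p: "prime p" and C: "prime_chain p n C len"
  shows "len \<le> n + 1"
proof -
  have "\<forall>j\<in>{..len}. \<exists>x. int_prime_ideal (fst x) \<and> snd x \<le> n \<and> C j = ghost_tideal p (fst x) (snd x) n"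
    using C tprime_eq_ghost_tideal[OF p] by (fastforce simp: prime_chain_def)
  then obtain x where x: "\<And>j. j \<le> len \<Longrightarrow>
      int_prime_ideal (fst (x j)) \<and> snd (x j) \<le> n \<and> C j = ghost_tideal p (fst (x j)) (snd (x j)) n"
    by (metis atMost_iff bchoice)
  define h where "h j = ghost_height p n (fst (x j)) (snd (x j))" for j
  have "h j < h (Suc j)" if "j < len" for j
    using C that x[of j] x[of "Suc j"] unfolding h_def prime_chain_def
    by (intro ghost_height_strict_mono[OF p]) auto
  then have "j \<le> h j" if "j \<le> len" for j
    using that by (induction j) (auto simp: Suc_le_eq intro: le_less_trans)
  then have "len \<le> h len" by simp
  also have "\<dots> \<le> n + 1" unfolding h_def by (rule ghost_height_le)
  finally show ?thesis .
qed

theorem corollary6: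
  fixes p r :: nat
  assumes "prime p"
  shows "tdim p r = enat (r + 1)
    \<and> (\<forall>q::nat. prime q \<and> q \<noteq> p \<longrightarrow> prime_chain p r (std_chain p r q) (r + 1))"
proof
  show chains: "\<forall>q::nat. prime q \<and> q \<noteq> p \<longrightarrow> prime_chain p r (std_chain p r q) (r + 1)"
    using std_chain_prime_chain[OF assms] by blast
  obtain q :: nat where "prime q" "q \<noteq> p"
    using bigger_prime[of p] by blast
  then have "enat (r + 1) \<in> {enat len | len. \<exists>C. prime_chain p r C len}"
    using chains by blast
  moreover have "x \<le> enat (r + 1)" if "x \<in> {enat len | len. \<exists>C. prime_chain p r C len}" for x
    using that prime_chain_length_le[OF assms] by auto
  ultimately show "tdim p r = enat (r + 1)"
    unfolding tdim_def by (intro antisym Sup_least Sup_upper)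
qed

end
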